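(* Let $\mathcal H$ be an infinite-dimensional complex Hilbert space and let $\mathcal R_f(\mathcal H)$ be the set of regular forms in $\mathcal V_f(\mathcal H)$. Then $(\mathcal R_f(\mathcal H);\oplus_{|\mathcal R_f(\mathcal H)},o)$ is a generalized effect algebra, but $\mathcal R_f(\mathcal H)$ is not a sub-generalized effect algebra of $(\mathcal V_f(\mathcal H);\oplus,o)$.
   Context: Bilinear forms $t$ on $\mathcal H$ are sesquilinear maps $D(t)\times D(t)\to\mathbb C$ on a dense linear subspace $D(t)$ (linear in the first argument); $t$ is positive if $t(x,x)\ge0$ on $D(t)$, bounded if $\sup\{t(x,x)\mid x\in D(t),\|x\|=1\}<\infty$. The sum $t+s$ has domain $D(t)\cap D(s)$. $o$ is the zero form on $\mathcal H$. $\mathcal V_f(\mathcal H)$ is the set of positive bilinear forms with dense domain such that $D(t)=\mathcal H$ whenever $t$ is bounded; $t\oplus s$ is defined iff $t$ or $s$ is bounded or $D(t)=D(s)$, and then $t\oplus s=t+s$; $(\mathcal V_f(\mathcal H);\oplus,o)$ is a generalized effect algebra. A positive form $t$ is closed if $D(t)$ is a Hilbert space under $(x,y)_t=t(x,y)+(1+m_t)(x,y)$, where $m_t=\inf\{t(x,x)\mid x\in D(t),\|x\|=1\}$; it is closable if it has a closed extension. For a positive form $t$, its regular part $t_r$ is the largest closable positive form with domain $D(t)$ satisfying $t_r(x,x)\le t(x,x)$ for all $x\in D(t)$ (it exists), and its singular part is $t_s=t-t_r$ (a positive form with domain $D(t)$). $t$ is regular if $t_s=0$ and singular if $t_r=0$.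 A generalized effect algebra is a structure $(E;\oplus,0)$ with a partial operation that is commutative and associative (when one side is defined), has $x\oplus0=x$, is cancellative, and satisfies $x\oplus y=0\Rightarrow x=y=0$. A subset $Q\subseteq E$ is a sub-generalized effect algebra if $0\in Q$ and whenever $x\oplus y=z$ in $E$ with two of $x,y,z$ in $Q$, all three are in $Q$. For $Q\subseteq E$, $x\oplus_{|Q}y$ is defined iff $x\oplus y$ is defined in $E$ and lies in $Q$, and then equals $x\oplus y$. *)

theory Defs
  imports "HOL-Analysis.Analysis"
begin

class chilbert = banach +
  fixes hscale :: "complex \<Rightarrow> 'a \<Rightarrow> 'a"
    and hinner :: "'a \<Rightarrow> 'a \<Rightarrow> complex"
  assumes hscale_add_right: "hscale a (x + y) = hscale a x + hscale a y"
    and hscale_add_left: "hscale (a + b) x = hscale a x + hscale b x"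
    and hscale_hscale: "hscale a (hscale b x) = hscale (a * b) x"
    and hscale_one: "hscale 1 x = x"
    and scaleR_hscale: "scaleR r x = hscale (complex_of_real r) x"
    and hinner_add_left: "hinner (x + y) z = hinner x z + hinner y z"
    and hinner_hscale_left: "hinner (hscale a x) y = a * hinner x y"
    and hinner_commute: "hinner y x = cnj (hinner x y)"
    and norm_eq_sqrt_hinner: "norm x = sqrt (Re (hinner x x))"

definition infinite_dimensional :: "'h::chilbert itself \<Rightarrow> bool" where
  "infinite_dimensional _ \<longleftrightarrow>
     \<not> (\<exists>S :: 'h set. finite S \<and> (\<forall>x. \<exists>c. x = (\<Sum>s\<in>S. hscale (c s) s)))"

definition csubspace :: "'h::chilbert set \<Rightarrow> bool" where
  "csubspace D \<longleftrightarrow> 0 \<in> D \<and> (\<forall>x\<in>D. \<forall>y\<in>D. x + y \<in> D)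
      \<and> (\<forall>a. \<forall>x\<in>D. hscale a x \<in> D)"

text \<open>A form is represented by its domain together with its values; by
convention the value function is \<open>0\<close> outside \<open>D \<times> D\<close>, so that two forms
are equal iff they have the same domain and agree on it.\<close>

type_synonym 'h form = "'h set \<times> ('h \<Rightarrow> 'h \<Rightarrow> complex)"

definition dom_f :: "'h form \<Rightarrow> 'h set" where "dom_f t = fst t"
definition val_f :: "'h form \<Rightarrow> 'h \<Rightarrow> 'h \<Rightarrow> complex" where "val_f t = snd t"

definition is_form :: "'h::chilbert form \<Rightarrow> bool" where
  "is_form t \<longleftrightarrow> csubspace (dom_f t) \<and> closure (dom_f t) = UNIV
     \<and> (\<forall>x y. \<not> (x \<in> dom_f t \<and> y \<in> dom_f t) \<longrightarrow> val_f t x y = 0)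
     \<and> (\<forall>x\<in>dom_f t. \<forall>x'\<in>dom_f t. \<forall>y\<in>dom_f t.
          val_f t (x + x') y = val_f t x y + val_f t x' y
        \<and> val_f t y (x + x') = val_f t y x + val_f t y x')
     \<and> (\<forall>a. \<forall>x\<in>dom_f t. \<forall>y\<in>dom_f t.
          val_f t (hscale a x) y = a * val_f t x y
        \<and> val_f t y (hscale a x) = cnj a * val_f t y x)"

definition positive_f :: "'h::chilbert form \<Rightarrow> bool" where
  "positive_f t \<longleftrightarrow> is_form t \<and>
     (\<forall>x\<in>dom_f t. Im (val_f t x x) = 0 \<and> 0 \<le> Re (val_f t x x))"

definition bounded_f :: "'h::chilbert form \<Rightarrow> bool" where
  "bounded_f t \<longleftrightarrow> bdd_above {Re (val_f t x x) | x. x \<in> dom_f t \<and> norm x = 1}"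

definition zero_f :: "'h form" where
  "zero_f = (UNIV, \<lambda>x y. 0)"

definition add_f :: "'h form \<Rightarrow> 'h form \<Rightarrow> 'h form" where
  "add_f t s = (dom_f t \<inter> dom_f s,
     \<lambda>x y. if x \<in> dom_f t \<inter> dom_f s \<and> y \<in> dom_f t \<inter> dom_f s
           then val_f t x y + val_f s x y else 0)"

definition diff_f :: "'h form \<Rightarrow> 'h form \<Rightarrow> 'h form" where
  "diff_f t s = (dom_f t \<inter> dom_f s,
     \<lambda>x y. if x \<in> dom_f t \<inter> dom_f s \<and> y \<in> dom_f t \<inter> dom_f s
           then val_f t x y - val_f s x y else 0)"

definition Vf :: "'h::chilbert form set" where
  "Vf = {t. positive_f t \<and> (bounded_f t \<longrightarrow> dom_f t = UNIV)}"

definition oplus_Vf :: "'h::chilbert form \<Rightarrow> 'h form \<Rightarrow> 'h form option" where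
  "oplus_Vf t s = (if bounded_f t \<or> bounded_f s \<or> dom_f t = dom_f s
                   then Some (add_f t s) else None)"

definition m_f :: "'h::chilbert form \<Rightarrow> real" where
  "m_f t = Inf {Re (val_f t x x) | x. x \<in> dom_f t \<and> norm x = 1}"

text \<open>The norm induced by \<open>(x,y)_t = t(x,y) + (1 + m_t)(x,y)\<close>.\<close>

definition tnorm :: "'h::chilbert form \<Rightarrow> 'h \<Rightarrow> real" where
  "tnorm t x = sqrt (Re (val_f t x x) + (1 + m_f t) * (norm x)\<^sup>2)"

definition closed_f :: "'h::chilbert form \<Rightarrow> bool" where
  "closed_f t \<longleftrightarrow> positive_f t \<and>
     (\<forall>X :: nat \<Rightarrow> 'h. (\<forall>n. X n \<in> dom_f t) \<and>
        (\<forall>e>0. \<exists>N. \<forall>m\<ge>N. \<forall>n\<ge>N. tnorm t (X m - X n) < e)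
        \<longrightarrow> (\<exists>x\<in>dom_f t. (\<lambda>n. tnorm t (X n - x)) \<longlonglongrightarrow> 0))"

definition extends_f :: "'h form \<Rightarrow> 'h form \<Rightarrow> bool" where
  "extends_f s t \<longleftrightarrow> dom_f t \<subseteq> dom_f s \<and>
     (\<forall>x\<in>dom_f t. \<forall>y\<in>dom_f t. val_f s x y = val_f t x y)"

definition closable_f :: "'h::chilbert form \<Rightarrow> bool" where
  "closable_f t \<longleftrightarrow> (\<exists>s. closed_f s \<and> extends_f s t)"

definition regular_part_cand :: "'h::chilbert form \<Rightarrow> 'h form \<Rightarrow> bool" where
  "regular_part_cand t r \<longleftrightarrow> positive_f r \<and> closable_f r \<and> dom_f r = dom_f t \<and>
     (\<forall>x\<in>dom_f t. Re (val_f r x x) \<le> Re (val_f t x x))"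

definition regular_part :: "'h::chilbert form \<Rightarrow> 'h form" where
  "regular_part t = (THE r. regular_part_cand t r \<and>
     (\<forall>r'. regular_part_cand t r' \<longrightarrow>
        (\<forall>x\<in>dom_f t. Re (val_f r' x x) \<le> Re (val_f r x x))))"

definition singular_part :: "'h::chilbert form \<Rightarrow> 'h form" where
  "singular_part t = diff_f t (regular_part t)"

definition regular_f :: "'h::chilbert form \<Rightarrow> bool" where
  "regular_f t \<longleftrightarrow> (\<forall>x\<in>dom_f t. \<forall>y\<in>dom_f t. val_f (singular_part t) x y = 0)"

definition Rf :: "'h::chilbert form set" where
  "Rf = {t \<in> Vf. regular_f t}"

definition gen_effect_algebra :: "'a set \<Rightarrow> ('a \<Rightarrow> 'a \<Rightarrow> 'a option) \<Rightarrow> 'a \<Rightarrow> bool" where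
  "gen_effect_algebra E op z \<longleftrightarrow> z \<in> E
     \<and> (\<forall>x\<in>E. \<forall>y\<in>E. \<forall>w. op x y = Some w \<longrightarrow> w \<in> E)
     \<and> (\<forall>x\<in>E. \<forall>y\<in>E. op x y = op y x)
     \<and> (\<forall>x\<in>E. \<forall>y\<in>E. \<forall>w\<in>E.
          Option.bind (op x y) (\<lambda>u. op u w) = Option.bind (op y w) (\<lambda>v. op x v))
     \<and> (\<forall>x\<in>E. op x z = Some x)
     \<and> (\<forall>x\<in>E. \<forall>y\<in>E. \<forall>y'\<in>E. \<forall>w. op x y = Some w \<and> op x y' = Some w \<longrightarrow> y = y')
     \<and> (\<forall>x\<in>E. \<forall>y\<in>E. op x y = Some z \<longrightarrow> x = z \<and> y = z)"

definition sub_gea :: "'a set \<Rightarrow> ('a \<Rightarrow> 'a \<Rightarrow> 'a option) \<Rightarrow> 'a \<Rightarrow> 'a set \<Rightarrow> bool" where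
  "sub_gea E op z Q \<longleftrightarrow> Q \<subseteq> E \<and> z \<in> Q \<and>
     (\<forall>x\<in>E. \<forall>y\<in>E. \<forall>w\<in>E. op x y = Some w \<longrightarrow>
        ((x \<in> Q \<and> y \<in> Q) \<or> (x \<in> Q \<and> w \<in> Q) \<or> (y \<in> Q \<and> w \<in> Q))
        \<longrightarrow> x \<in> Q \<and> y \<in> Q \<and> w \<in> Q)"

definition restrict_op :: "'a set \<Rightarrow> ('a \<Rightarrow> 'a \<Rightarrow> 'a option) \<Rightarrow> 'a \<Rightarrow> 'a \<Rightarrow> 'a option" where
  "restrict_op Q op x y = (case op x y of Some w \<Rightarrow> if w \<in> Q then Some w else None | None \<Rightarrow> None)"

end

theory Submission
  imports Defs
begin

text \<open>A positive form \<open>t\<close> is closable iff \<open>x \<mapsto> t[x]\<close> is lower semicontinuous on \<open>D(t)\<close> for the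
  norm topology. A closed form is lower semicontinuous: minimizing \<open>t[u] + \<parallel>u\<parallel>\<^sup>2\<close> over the
  midpoint hulls of the tails of a convergent sequence produces a Cauchy sequence for the form
  norm. Conversely, the lower semicontinuous envelope of \<open>t[\<cdot>]\<close> still satisfies the
  parallelogram law, hence is the quadratic form of a form (Jordan--von Neumann); that form is
  closed, and its restriction to \<open>D(t)\<close> is the regular part \<open>t\<^sub>r\<close>. So \<open>t\<close> is regular iff \<open>t[\<cdot>]\<close> is
  lower semicontinuous, a property preserved by sums: \<open>R\<^sub>f(H)\<close> is closed under \<open>\<oplus>\<close> and inherits
  the generalized effect algebra structure of \<open>V\<^sub>f(H)\<close>.

  For the second claim take an orthonormal sequence \<open>(e\<^sub>n)\<close>, coefficients \<open>c\<^sub>n(u) = \<langle>u, e\<^sub>n\<rangle>\<close>, and on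
  \<open>D = {u. \<Sum>n. 4\<^sup>n \<bar>c\<^sub>n(u)\<bar>\<^sup>2 < \<infinity>}\<close> the forms \<open>x[u] = \<Sum>n. 4\<^sup>n \<bar>c\<^sub>n(u)\<bar>\<^sup>2\<close> and \<open>y[u] = \<bar>\<Sum>n. c\<^sub>n(u)\<bar>\<^sup>2\<close>.
  Partial sums give continuous minorants showing that \<open>x\<close> and \<open>x + y\<close> are lower semicontinuous,
  whereas \<open>y\<close> is not: \<open>e\<^sub>0\<close> is a limit of vectors of \<open>D\<close> with \<open>\<Sum>n. c\<^sub>n = 0\<close>. All three forms are
  unbounded with domain \<open>D\<close>, so \<open>x \<oplus> y = x + y\<close> in \<open>V\<^sub>f(H)\<close> with \<open>x\<close>, \<open>x + y\<close> regular and \<open>y\<close> not.\<close>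

lemma hinner_zero_left[simp]: "hinner 0 y = 0"
  using hinner_add_left[of 0 0 y] by simp

lemma hinner_zero_right[simp]: "hinner x 0 = 0"
  by (metis hinner_commute hinner_zero_left complex_cnj_zero)

lemma hinner_add_right: "hinner x (y + z) = hinner x y + hinner x z"
  by (metis hinner_commute hinner_add_left complex_cnj_add)

lemma hinner_hscale_right: "hinner x (hscale a y) = cnj a * hinner x y"
  by (metis hinner_commute hinner_hscale_left complex_cnj_mult)

lemma hinner_minus_left: "hinner (- x) y = - hinner x y"
  using hinner_add_left[of x "-x" y] by (simp add: minus_unique)

lemma hinner_minus_right: "hinner x (- y) = - hinner x y"
  by (metis hinner_commute hinner_minus_left complex_cnj_minus)

lemma hinner_diff_left: "hinner (x - z) y = hinner x y - hinner z y"
  using hinner_add_left[of x "-z" y] by (simp add: hinner_minus_left)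

lemma hinner_diff_right: "hinner x (y - z) = hinner x y - hinner x z"
  using hinner_add_right[of x y "-z"] by (simp add: hinner_minus_right)

lemma hscale_zero_right[simp]: "hscale a 0 = 0"
  using hscale_add_right[of a 0 0] by simp

lemma hscale_zero_left[simp]: "hscale 0 x = 0"
  using hscale_add_left[of 0 0 x] by simp

lemma hscale_minus_right: "hscale a (- x) = - hscale a x"
  using hscale_add_right[of a x "-x"] by (simp add: minus_unique)

lemma hscale_minus_left: "hscale (- a) x = - hscale a x"
  using hscale_add_left[of a "-a" x] by (simp add: minus_unique)

lemma hscale_diff_right: "hscale a (x - y) = hscale a x - hscale a y"
  using hscale_add_right[of a x "-y"] by (simp add: hscale_minus_right)

lemma hscale_diff_left: "hscale (a - b) x = hscale a x - hscale b x"
  using hscale_add_left[of a "-b" x] by (simp add: hscale_minus_left)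

lemma hscale_of_real: "hscale (complex_of_real r) x = scaleR r x"
  by (simp add: scaleR_hscale)

lemma hscale_minus_one: "hscale (-1) x = - x"
  by (simp add: hscale_minus_left hscale_one)

lemma hinner_sum_left: "hinner (sum f S) y = (\<Sum>i\<in>S. hinner (f i) y)"
  by (induction S rule: infinite_finite_induct) (auto simp: hinner_add_left)

lemma hinner_sum_right: "hinner y (sum f S) = (\<Sum>i\<in>S. hinner y (f i))"
  by (induction S rule: infinite_finite_induct) (auto simp: hinner_add_right)

lemma hinner_self_Im: "Im (hinner x x) = 0"
  using hinner_commute[of x x] by (metis cnj.simps(2) complex_cnj_cnj equal_neg_zero)

lemma hinner_self_Re: "Re (hinner x x) = (norm x)^2"
proof -
  have "Re (hinner x x) \<ge> 0" using norm_eq_sqrt_hinner[of x]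
    by (metis norm_ge_zero real_sqrt_ge_0_iff)
  then show ?thesis using norm_eq_sqrt_hinner[of x] by simp
qed

lemma hinner_self: "hinner x x = complex_of_real ((norm x)^2)"
  by (metis complex_eq_iff hinner_self_Im hinner_self_Re Re_complex_of_real Im_complex_of_real)

lemma norm_hscale: "norm (hscale a x) = cmod a * norm x"
proof -
  have "(norm (hscale a x))^2 = Re (hinner (hscale a x) (hscale a x))"
    by (simp add: hinner_self_Re)
  also have "\<dots> = Re (a * cnj a * hinner x x)"
    by (simp only: hinner_hscale_left hinner_hscale_right mult.assoc mult.left_commute)
  also have "\<dots> = (cmod a * norm x)^2"
    by (simp only: hinner_self flip: complex_norm_square of_real_mult)
       (simp add: power_mult_distrib)
  finally show ?thesis
    by (simp add: power2_eq_iff_nonneg)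
qed

lemma Cauchy_Schwarz_abstract:
  fixes hxy hyx bxx byy :: complex and P :: "complex \<Rightarrow> complex"
  assumes exp: "\<And>a. P a = bxx - cnj a * hxy - a * hyx + a * cnj a * byy"
    and herm: "hyx = cnj hxy"
    and pos: "\<And>a. 0 \<le> Re (P a)"
    and py: "0 \<le> Re byy"
  shows "(cmod hxy)^2 \<le> Re bxx * Re byy"
proof (cases "hxy = 0")
  case True
  have "0 \<le> Re (P 0)" by (rule pos)
  then have "0 \<le> Re bxx" by (simp add: exp)
  then show ?thesis using True py by simp
next
  case False
  have key: "0 \<le> Re bxx - 2 * t * (cmod hxy)^2 + t^2 * (cmod hxy)^2 * Re byy" for t :: real
  proof -
    have "P (complex_of_real t * hxy) = bxx - complex_of_real (2 * t * (cmod hxy)^2)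
          + complex_of_real (t^2 * (cmod hxy)^2) * byy"
    proof -
      have hh: "hxy * cnj hxy = complex_of_real ((cmod hxy)^2)" "cnj hxy * hxy = complex_of_real ((cmod hxy)^2)"
        by (metis complex_norm_square, metis complex_norm_square mult.commute)
      have "P (complex_of_real t * hxy) = bxx - complex_of_real t * (cnj hxy * hxy)
          - complex_of_real t * (hxy * cnj hxy) + complex_of_real t * complex_of_real t * (hxy * cnj hxy) * byy"
        by (simp add: exp herm algebra_simps)
      then show ?thesis unfolding hh by (simp add: algebra_simps power2_eq_square)
    qed
    moreover have "Re (complex_of_real (t^2 * (cmod hxy)^2) * byy) = t^2 * (cmod hxy)^2 * Re byy"
      by simp
    ultimately show ?thesis using pos[of "complex_of_real t * hxy"] by simp
  qed
  have hpos: "(cmod hxy)^2 > 0" using False by simp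
  show ?thesis
  proof (cases "Re byy = 0")
    case True
    have "0 \<le> Re bxx - 2 * ((Re bxx + 1) / (2 * (cmod hxy)^2)) * (cmod hxy)^2"
      using key[of "(Re bxx + 1) / (2 * (cmod hxy)^2)"] True by simp
    also have "\<dots> = -1" using hpos by (simp add: field_simps)
    finally show ?thesis by simp
  next
    case False
    then have yb: "Re byy > 0" using py by simp
    have "0 \<le> Re bxx - 2 * (1 / Re byy) * (cmod hxy)^2 + (1/Re byy)^2 * (cmod hxy)^2 * Re byy"
      by (rule key)
    also have "\<dots> = Re bxx - (cmod hxy)^2 / Re byy" using yb by (simp add: field_simps power2_eq_square)
    finally have "(cmod hxy)^2 / Re byy \<le> Re bxx" by simp
    then show ?thesis using yb by (simp add: field_simps)
  qed
qed

lemma hinner_CS: "cmod (hinner x y) \<le> norm x * norm y"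
proof -
  have "(cmod (hinner x y))^2 \<le> Re (hinner x x) * Re (hinner y y)"
  proof (rule Cauchy_Schwarz_abstract[where P = "\<lambda>a. hinner (x - hscale a y) (x - hscale a y)"
        and hyx = "hinner y x"])
    fix a
    show "hinner (x - hscale a y) (x - hscale a y) =
      hinner x x - cnj a * hinner x y - a * hinner y x + a * cnj a * hinner y y"
      by (simp add: hinner_diff_left hinner_diff_right hinner_hscale_left hinner_hscale_right
          algebra_simps)
    show "0 \<le> Re (hinner (x - hscale a y) (x - hscale a y))" by (simp add: hinner_self_Re)
  qed (auto simp: hinner_commute[of y x] hinner_self_Im hinner_self_Re)
  then have "(cmod (hinner x y))^2 \<le> (norm x * norm y)^2"
    by (simp add: hinner_self_Re power_mult_distrib)
  then show ?thesis by (simp add: power2_le_iff_abs_le)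
qed

lemma bounded_linear_hinner_left: "bounded_linear (\<lambda>x. hinner x y)"
proof
  show "hinner (x + z) y = hinner x y + hinner z y" for x z by (rule hinner_add_left)
  show "hinner (scaleR r x) y = scaleR r (hinner x y)" for r x
    by (simp add: scaleR_hscale hinner_hscale_left scaleR_conv_of_real)
  show "\<exists>K. \<forall>x. norm (hinner x y) \<le> norm x * K"
    using hinner_CS by (intro exI[of _ "norm y"]) auto
qed

lemma continuous_hinner_left: "continuous_on UNIV (\<lambda>x. hinner x y)"
  using bounded_linear.continuous_on[OF bounded_linear_hinner_left] continuous_on_id by blast

definition quad_f :: "'h::chilbert form \<Rightarrow> 'h \<Rightarrow> real" where
  "quad_f t x = Re (val_f t x x)"

lemma form_pair: "t = (dom_f t, val_f t)"
  by (simp add: dom_f_def val_f_def)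

lemma dom_f_pair[simp]: "dom_f (D, v) = D" and val_f_pair[simp]: "val_f (D, v) = v"
  by (simp_all add: dom_f_def val_f_def)

lemma csubspace_0: "csubspace D \<Longrightarrow> 0 \<in> D"
  and csubspace_add: "csubspace D \<Longrightarrow> x \<in> D \<Longrightarrow> y \<in> D \<Longrightarrow> x + y \<in> D"
  and csubspace_hscale: "csubspace D \<Longrightarrow> x \<in> D \<Longrightarrow> hscale a x \<in> D"
  by (auto simp: csubspace_def)

lemma csubspace_minus: "csubspace D \<Longrightarrow> x \<in> D \<Longrightarrow> - x \<in> D"
  using csubspace_hscale[of D x "-1"] by (simp add: hscale_minus_one)

lemma csubspace_diff: "csubspace D \<Longrightarrow> x \<in> D \<Longrightarrow> y \<in> D \<Longrightarrow> x - y \<in> D"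
  by (metis csubspace_add csubspace_minus diff_conv_add_uminus)

lemma csubspace_scaleR: "csubspace D \<Longrightarrow> x \<in> D \<Longrightarrow> scaleR r x \<in> D"
  using csubspace_hscale[of D x "complex_of_real r"] by (simp add: hscale_of_real)

lemma csubspace_Int: "csubspace A \<Longrightarrow> csubspace B \<Longrightarrow> csubspace (A \<inter> B)"
  by (auto simp: csubspace_def)

lemma csubspace_UNIV: "csubspace UNIV"
  by (auto simp: csubspace_def)

lemma is_formD:
  assumes "is_form t"
  shows "csubspace (dom_f t)" "closure (dom_f t) = UNIV"
    "\<And>x y. \<not> (x \<in> dom_f t \<and> y \<in> dom_f t) \<Longrightarrow> val_f t x y = 0"
    "\<And>x x' y. x \<in> dom_f t \<Longrightarrow> x' \<in> dom_f t \<Longrightarrow> y \<in> dom_f t \<Longrightarrow>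
        val_f t (x + x') y = val_f t x y + val_f t x' y"
    "\<And>x x' y. x \<in> dom_f t \<Longrightarrow> x' \<in> dom_f t \<Longrightarrow> y \<in> dom_f t \<Longrightarrow>
        val_f t y (x + x') = val_f t y x + val_f t y x'"
    "\<And>a x y. x \<in> dom_f t \<Longrightarrow> y \<in> dom_f t \<Longrightarrow> val_f t (hscale a x) y = a * val_f t x y"
    "\<And>a x y. x \<in> dom_f t \<Longrightarrow> y \<in> dom_f t \<Longrightarrow> val_f t y (hscale a x) = cnj a * val_f t y x"
  using assms unfolding is_form_def by blast+

lemma form_ext:
  assumes "is_form t" "is_form s" "dom_f t = dom_f s"
    and "\<And>x y. x \<in> dom_f t \<Longrightarrow> y \<in> dom_f t \<Longrightarrow> val_f t x y = val_f s x y"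
  shows "t = s"
proof -
  have "val_f t = val_f s"
  proof (intro ext)
    fix x y show "val_f t x y = val_f s x y"
    proof (cases "x \<in> dom_f t \<and> y \<in> dom_f t")
      case True then show ?thesis using assms(4) by blast
    next
      case False then show ?thesis
        using is_formD(3)[OF assms(1), of x y] is_formD(3)[OF assms(2), of x y] assms(3) by simp
    qed
  qed
  then show ?thesis using assms(3) form_pair[of t] form_pair[of s] by metis
qed

context
  fixes t :: "'h::chilbert form"
  assumes F: "is_form t"
begin

lemma fdom_0: "0 \<in> dom_f t" and fdom_add: "x \<in> dom_f t \<Longrightarrow> y \<in> dom_f t \<Longrightarrow> x + y \<in> dom_f t"
  and fdom_hscale: "x \<in> dom_f t \<Longrightarrow> hscale a x \<in> dom_f t"
  and fdom_minus: "x \<in> dom_f t \<Longrightarrow> - x \<in> dom_f t"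
  and fdom_diff: "x \<in> dom_f t \<Longrightarrow> y \<in> dom_f t \<Longrightarrow> x - y \<in> dom_f t"
  by (rule csubspace_0[OF is_formD(1)[OF F]] csubspace_add[OF is_formD(1)[OF F]]
      csubspace_hscale[OF is_formD(1)[OF F]] csubspace_minus[OF is_formD(1)[OF F]]
      csubspace_diff[OF is_formD(1)[OF F]]; assumption)+

lemma fval_add_left: "x \<in> dom_f t \<Longrightarrow> x' \<in> dom_f t \<Longrightarrow> y \<in> dom_f t \<Longrightarrow>
        val_f t (x + x') y = val_f t x y + val_f t x' y"
  and fval_add_right: "x \<in> dom_f t \<Longrightarrow> x' \<in> dom_f t \<Longrightarrow> y \<in> dom_f t \<Longrightarrow>
        val_f t y (x + x') = val_f t y x + val_f t y x'"
  and fval_hscale_left: "x \<in> dom_f t \<Longrightarrow> y \<in> dom_f t \<Longrightarrow> val_f t (hscale a x) y = a * val_f t x y"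
  and fval_hscale_right: "x \<in> dom_f t \<Longrightarrow> y \<in> dom_f t \<Longrightarrow> val_f t y (hscale a x) = cnj a * val_f t y x"
  and fval_out: "\<not> (x \<in> dom_f t \<and> y \<in> dom_f t) \<Longrightarrow> val_f t x y = 0"
  by (rule is_formD[OF F]; assumption)+

lemma fval_minus_left: "x \<in> dom_f t \<Longrightarrow> y \<in> dom_f t \<Longrightarrow> val_f t (- x) y = - val_f t x y"
  using fval_hscale_left[of x y "-1"] by (simp add: hscale_minus_one)

lemma fval_minus_right: "x \<in> dom_f t \<Longrightarrow> y \<in> dom_f t \<Longrightarrow> val_f t y (- x) = - val_f t y x"
  using fval_hscale_right[of x y "-1"] by (simp add: hscale_minus_one)

lemma fval_diff_left: "x \<in> dom_f t \<Longrightarrow> x' \<in> dom_f t \<Longrightarrow> y \<in> dom_f t \<Longrightarrow>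
        val_f t (x - x') y = val_f t x y - val_f t x' y"
  using fval_add_left[of x "-x'" y] fval_minus_left fdom_minus by simp

lemma fval_diff_right: "x \<in> dom_f t \<Longrightarrow> x' \<in> dom_f t \<Longrightarrow> y \<in> dom_f t \<Longrightarrow>
        val_f t y (x - x') = val_f t y x - val_f t y x'"
  using fval_add_right[of x "-x'" y] fval_minus_right fdom_minus by simp

lemma fval_zero_left[simp]: "val_f t 0 y = 0"
proof (cases "y \<in> dom_f t")
  case True
  have "val_f t (0 + 0) y = val_f t 0 y + val_f t 0 y" by (rule fval_add_left[OF fdom_0 fdom_0 True])
  then show ?thesis by simp
qed (simp add: fval_out)

lemma fval_zero_right[simp]: "val_f t y 0 = 0"
proof (cases "y \<in> dom_f t")
  case True
  have "val_f t y (0 + 0) = val_f t y 0 + val_f t y 0" by (rule fval_add_right[OF fdom_0 fdom_0 True])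
  then show ?thesis by simp
qed (simp add: fval_out)

lemma fval_expand: "x \<in> dom_f t \<Longrightarrow> y \<in> dom_f t \<Longrightarrow>
   val_f t (x + y) (x + y) = val_f t x x + val_f t x y + val_f t y x + val_f t y y"
  by (simp add: fval_add_left fval_add_right fdom_add)

lemma fval_expand_diff: "x \<in> dom_f t \<Longrightarrow> y \<in> dom_f t \<Longrightarrow>
   val_f t (x - y) (x - y) = val_f t x x - val_f t x y - val_f t y x + val_f t y y"
  by (simp add: fval_diff_left fval_diff_right fdom_diff)

end

lemma form_eq_if_diag_eq:
  assumes "is_form t" "is_form s" "dom_f t = dom_f s"
    and diag: "\<And>x. x \<in> dom_f t \<Longrightarrow> val_f t x x = val_f s x x"
  shows "t = s"
proof (rule form_ext[OF assms(1-3)])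
  fix x y assume x: "x \<in> dom_f t" and y: "y \<in> dom_f t"
  define d where "d = (\<lambda>u v. val_f t u v - val_f s u v)"
  have ys: "y \<in> dom_f s" "x \<in> dom_f s" using x y assms(3) by auto
  have dzero: "d u u = 0" if "u \<in> dom_f t" for u using diag[OF that] by (simp add: d_def)
  have iy: "hscale \<i> y \<in> dom_f t" using fdom_hscale[OF assms(1) y] .
  have e1: "d (x + y) (x + y) = d x x + d x y + d y x + d y y"
    unfolding d_def using fval_expand[OF assms(1) x y] fval_expand[OF assms(2) ys(2) ys(1)] by simp
  have iys: "hscale \<i> y \<in> dom_f s" using fdom_hscale[OF assms(2) ys(1)] .
  have et: "val_f t (x + hscale \<i> y) (x + hscale \<i> y) = val_f t x x - \<i> * val_f t x y
       + \<i> * val_f t y x + val_f t (hscale \<i> y) (hscale \<i> y)"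
    using fval_expand[OF assms(1) x iy] fval_hscale_left[OF assms(1) y x] fval_hscale_right[OF assms(1) y x]
    by simp
  have orth_list: "val_f s (x + hscale \<i> y) (x + hscale \<i> y) = val_f s x x - \<i> * val_f s x y
       + \<i> * val_f s y x + val_f s (hscale \<i> y) (hscale \<i> y)"
    using fval_expand[OF assms(2) ys(2) iys] fval_hscale_left[OF assms(2) ys(1) ys(2)]
      fval_hscale_right[OF assms(2) ys(1) ys(2)]
    by simp
  have e2: "d (x + hscale \<i> y) (x + hscale \<i> y) = d x x + (- \<i>) * d x y + \<i> * d y x + d (hscale \<i> y) (hscale \<i> y)"
    unfolding d_def et orth_list by (simp add: algebra_simps)
  have "d x y + d y x = 0" using e1 dzero x y fdom_add[OF assms(1) x y] by simp
  moreover have "(- \<i>) * d x y + \<i> * d y x = 0"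
    using e2 dzero x iy fdom_add[OF assms(1) x iy] by simp
  ultimately have "\<i> * (d y x - d x y) = 0" "d y x = - d x y"
    by (simp_all add: algebra_simps add_eq_0_iff2)
  then have "d x y = 0" by simp
  then show "val_f t x y = val_f s x y" by (simp add: d_def)
qed

context
  fixes t :: "'h::chilbert form"
  assumes P: "positive_f t"
begin

lemma pos_form: "is_form t" using P by (simp add: positive_f_def)

lemma pos_diag: "x \<in> dom_f t \<Longrightarrow> val_f t x x = complex_of_real (quad_f t x)"
  using P by (simp add: positive_f_def quad_f_def complex_eq_iff)

lemma quad_f_out: "x \<notin> dom_f t \<Longrightarrow> quad_f t x = 0"
  by (simp add: quad_f_def fval_out[OF pos_form])

lemma quad_f_nonneg: "0 \<le> quad_f t x"
proof (cases "x \<in> dom_f t")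
  case True then show ?thesis using P by (simp add: positive_f_def quad_f_def)
qed (simp add: quad_f_out)

lemma pos_herm:
  assumes x: "x \<in> dom_f t" and y: "y \<in> dom_f t"
  shows "val_f t y x = cnj (val_f t x y)"
proof -
  have F: "is_form t" by (rule pos_form)
  have iy: "hscale \<i> y \<in> dom_f t" by (rule fdom_hscale[OF F y])
  have "Im (val_f t (x + y) (x + y)) = 0" using pos_diag[OF fdom_add[OF F x y]] by simp
  then have a: "Im (val_f t x y + val_f t y x) = 0"
    using fval_expand[OF F x y] pos_diag[OF x] pos_diag[OF y] by simp
  have "Im (val_f t (x + hscale \<i> y) (x + hscale \<i> y)) = 0" using pos_diag[OF fdom_add[OF F x iy]] by simp
  then have "Im (val_f t x (hscale \<i> y) + val_f t (hscale \<i> y) x) = 0"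
    using fval_expand[OF F x iy] pos_diag[OF x] pos_diag[OF iy] by simp
  then have b: "Re (val_f t y x) = Re (val_f t x y)"
    using fval_hscale_left[OF F y x, of \<i>] fval_hscale_right[OF F y x, of \<i>] by simp
  show ?thesis using a b by (simp add: complex_eq_iff)
qed

lemma quad_f_add: "x \<in> dom_f t \<Longrightarrow> y \<in> dom_f t \<Longrightarrow>
   quad_f t (x + y) = quad_f t x + quad_f t y + 2 * Re (val_f t x y)"
  using fval_expand[OF pos_form] pos_herm[of x y] unfolding quad_f_def by simp

lemma quad_f_diff: "x \<in> dom_f t \<Longrightarrow> y \<in> dom_f t \<Longrightarrow>
   quad_f t (x - y) = quad_f t x + quad_f t y - 2 * Re (val_f t x y)"
  using fval_expand_diff[OF pos_form] pos_herm[of x y] unfolding quad_f_def by simp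

lemma quad_f_hscale: "quad_f t (hscale a x) = (cmod a)^2 * quad_f t x"
proof (cases "x \<in> dom_f t")
  case True
  then have "val_f t (hscale a x) (hscale a x) = a * cnj a * val_f t x x"
    using fval_hscale_left[OF pos_form] fval_hscale_right[OF pos_form] fdom_hscale[OF pos_form]
    by (simp add: mult.assoc)
  also have "\<dots> = complex_of_real ((cmod a)^2) * complex_of_real (quad_f t x)"
    by (simp only: complex_norm_square pos_diag[OF True])
  finally show ?thesis unfolding quad_f_def by (simp only: Re_complex_of_real flip: of_real_mult)
next
  case False
  show ?thesis
  proof (cases "a = 0")
    case True then show ?thesis by (simp add: quad_f_def fval_zero_left[OF pos_form])
  next
    case a: False
    have "hscale a x \<notin> dom_f t"
    proof
      assume "hscale a x \<in> dom_f t"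
      then have "hscale (inverse a) (hscale a x) \<in> dom_f t" by (rule fdom_hscale[OF pos_form])
      then show False using False a by (simp add: hscale_hscale hscale_one)
    qed
    then show ?thesis using False by (simp add: quad_f_out)
  qed
qed

lemma quad_f_minus: "quad_f t (- x) = quad_f t x"
  using quad_f_hscale[of "-1" x] by (simp add: hscale_minus_one)

lemma quad_f_zero[simp]: "quad_f t 0 = 0"
  using quad_f_hscale[of 0 0] by simp

lemma quad_f_scaleR: "quad_f t (scaleR r x) = r^2 * quad_f t x"
  using quad_f_hscale[of "complex_of_real r" x] by (simp add: hscale_of_real)

lemma quad_f_parallelogram: "x \<in> dom_f t \<Longrightarrow> y \<in> dom_f t \<Longrightarrow>
   quad_f t (x + y) + quad_f t (x - y) = 2 * quad_f t x + 2 * quad_f t y"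
  using quad_f_add quad_f_diff by simp

lemma pos_CS:
  assumes x: "x \<in> dom_f t" and y: "y \<in> dom_f t"
  shows "(cmod (val_f t x y))^2 \<le> quad_f t x * quad_f t y"
proof -
  have F: "is_form t" by (rule pos_form)
  have "(cmod (val_f t x y))^2 \<le> Re (val_f t x x) * Re (val_f t y y)"
  proof (rule Cauchy_Schwarz_abstract[where P = "\<lambda>a. val_f t (x - hscale a y) (x - hscale a y)"
        and hyx = "val_f t y x"])
    fix a
    have ay: "hscale a y \<in> dom_f t" by (rule fdom_hscale[OF F y])
    show "val_f t (x - hscale a y) (x - hscale a y) =
      val_f t x x - cnj a * val_f t x y - a * val_f t y x + a * cnj a * val_f t y y"
      using fval_expand_diff[OF F x ay] fval_hscale_left[OF F y] fval_hscale_right[OF F y]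
        fval_hscale_left[OF F y ay] fval_hscale_right[OF F y y] x
      by (simp add: algebra_simps)
    show "0 \<le> Re (val_f t (x - hscale a y) (x - hscale a y))"
      using quad_f_nonneg[of "x - hscale a y"] by (simp add: quad_f_def)
  qed (auto simp: pos_herm[OF x y] pos_diag[OF x] pos_diag[OF y] quad_f_nonneg quad_f_nonneg[unfolded quad_f_def])
  then show ?thesis by (simp add: quad_f_def)
qed

lemma pos_CS_Re:
  assumes x: "x \<in> dom_f t" and y: "y \<in> dom_f t"
  shows "\<bar>Re (val_f t x y)\<bar> \<le> sqrt (quad_f t x) * sqrt (quad_f t y)"
proof -
  have "\<bar>Re (val_f t x y)\<bar> \<le> cmod (val_f t x y)" by (rule abs_Re_le_cmod)
  also have "\<dots> = sqrt ((cmod (val_f t x y))^2)" by simp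
  also have "\<dots> \<le> sqrt (quad_f t x * quad_f t y)" using pos_CS[OF x y] by (rule real_sqrt_le_mono)
  finally show ?thesis by (simp add: real_sqrt_mult)
qed

lemma quad_f_sqrt_triangle:
  assumes x: "x \<in> dom_f t" and y: "y \<in> dom_f t"
  shows "sqrt (quad_f t (x + y)) \<le> sqrt (quad_f t x) + sqrt (quad_f t y)"
proof -
  have "quad_f t (x + y) \<le> (sqrt (quad_f t x) + sqrt (quad_f t y))^2"
    using quad_f_add[OF x y] pos_CS_Re[OF x y] quad_f_nonneg[of x] quad_f_nonneg[of y]
    by (simp add: power2_sum)
  then show ?thesis
    using quad_f_nonneg by (simp add: real_le_lsqrt)
qed

lemma quad_f_sqrt_diff:
  assumes x: "x \<in> dom_f t" and y: "y \<in> dom_f t"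
  shows "\<bar>sqrt (quad_f t x) - sqrt (quad_f t y)\<bar> \<le> sqrt (quad_f t (x - y))"
proof -
  have F: "is_form t" by (rule pos_form)
  have "sqrt (quad_f t x) \<le> sqrt (quad_f t (x - y)) + sqrt (quad_f t y)"
    using quad_f_sqrt_triangle[OF fdom_diff[OF F x y] y] by simp
  moreover have "sqrt (quad_f t y) \<le> sqrt (quad_f t (x - y)) + sqrt (quad_f t x)"
    using quad_f_sqrt_triangle[OF fdom_diff[OF F y x] x] quad_f_minus[of "x - y"] by simp
  ultimately show ?thesis unfolding abs_le_iff by linarith
qed

end

lemma pos_form_eq:
  assumes "positive_f t" "positive_f s" "dom_f t = dom_f s"
    and "\<And>x. x \<in> dom_f t \<Longrightarrow> quad_f t x = quad_f s x"
  shows "t = s"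
proof (rule form_eq_if_diag_eq[OF pos_form[OF assms(1)] pos_form[OF assms(2)] assms(3)])
  fix x assume x: "x \<in> dom_f t"
  then have xs: "x \<in> dom_f s" using assms(3) by simp
  show "val_f t x x = val_f s x x"
    using pos_diag[OF assms(1) x] pos_diag[OF assms(2) xs] assms(4)[OF x] by simp
qed

lemma zero_f_simps[simp]: "dom_f zero_f = UNIV" "val_f zero_f x y = 0"
  by (simp_all add: zero_f_def)

lemma positive_zero_f: "positive_f zero_f"
  by (simp add: positive_f_def is_form_def csubspace_UNIV)

lemma bounded_zero_f: "bounded_f zero_f"
  by (auto simp: bounded_f_def bdd_above_def)

lemma zero_in_Vf: "zero_f \<in> Vf"
  by (simp add: Vf_def positive_zero_f)

lemma quad_f_zero_f[simp]: "quad_f zero_f x = 0" by (simp add: quad_f_def)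

lemma add_f_simps: "dom_f (add_f t s) = dom_f t \<inter> dom_f s"
  "x \<in> dom_f t \<inter> dom_f s \<Longrightarrow> y \<in> dom_f t \<inter> dom_f s \<Longrightarrow> val_f (add_f t s) x y = val_f t x y + val_f s x y"
  by (simp_all add: add_f_def)

lemma positive_add_f:
  assumes "positive_f t" "positive_f s" "closure (dom_f t \<inter> dom_f s) = UNIV"
  shows "positive_f (add_f t s)"
proof -
  have Ft: "is_form t" by (rule pos_form[OF assms(1)])
  have Fs: "is_form s" by (rule pos_form[OF assms(2)])
  let ?I = "dom_f t \<inter> dom_f s"
  have sub: "csubspace ?I" using csubspace_Int[OF is_formD(1)[OF Ft] is_formD(1)[OF Fs]] .
  have v: "val_f (add_f t s) x y = (if x \<in> ?I \<and> y \<in> ?I then val_f t x y + val_f s x y else 0)" for x y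
    by (simp add: add_f_def)
  have I: "x \<in> ?I \<Longrightarrow> y \<in> ?I \<Longrightarrow> x + y \<in> ?I" "x \<in> ?I \<Longrightarrow> hscale a x \<in> ?I" for x y a
    using sub csubspace_add csubspace_hscale by blast+
  have 1: "val_f (add_f t s) (x + x') y = val_f (add_f t s) x y + val_f (add_f t s) x' y
      \<and> val_f (add_f t s) y (x + x') = val_f (add_f t s) y x + val_f (add_f t s) y x'"
    if "x \<in> ?I" "x' \<in> ?I" "y \<in> ?I" for x x' y
    using that I(1)[OF that(1,2)] unfolding v
    by (simp add: fval_add_left[OF Ft] fval_add_left[OF Fs] fval_add_right[OF Ft] fval_add_right[OF Fs])
  have 2: "val_f (add_f t s) (hscale a x) y = a * val_f (add_f t s) x y
      \<and> val_f (add_f t s) y (hscale a x) = cnj a * val_f (add_f t s) y x"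
    if "x \<in> ?I" "y \<in> ?I" for x y a
    using that I(2)[OF that(1)] unfolding v
    by (simp add: fval_hscale_left[OF Ft] fval_hscale_left[OF Fs] fval_hscale_right[OF Ft]
        fval_hscale_right[OF Fs] distrib_left)
  have 3: "Im (val_f (add_f t s) x x) = 0 \<and> 0 \<le> Re (val_f (add_f t s) x x)" if "x \<in> ?I" for x
    using that unfolding v
    by (simp add: pos_diag[OF assms(1)] pos_diag[OF assms(2)] quad_f_nonneg[OF assms(1)] quad_f_nonneg[OF assms(2)])
  show ?thesis
    unfolding positive_f_def is_form_def add_f_simps(1)
    using sub assms(3) 1 2 3 by (auto simp: v)
qed

lemma quad_f_add_f: "x \<in> dom_f t \<inter> dom_f s \<Longrightarrow> quad_f (add_f t s) x = quad_f t x + quad_f s x"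
  by (simp add: quad_f_def add_f_simps)

lemma add_f_commute: "add_f t s = add_f s t"
  unfolding add_f_def by (simp add: Int_commute conj_ac) (intro ext, simp add: add.commute)

lemma add_f_assoc: "add_f (add_f t s) u = add_f t (add_f s u)"
  by (auto simp: add_f_def add.assoc dom_f_def val_f_def intro!: ext)

section \<open>Quadratic functionals and polarization\<close>

lemma additive_bounded_eq_zero:
  fixes g :: "real \<Rightarrow> real"
  assumes add: "\<And>a b. g (a + b) = g a + g b" and bd: "\<And>r. \<bar>g r\<bar> \<le> C"
  shows "g r = 0"
proof (rule ccontr)
  assume ne: "g r \<noteq> 0"
  have g0: "g 0 = 0" using add[of 0 0] by simp
  have gnat: "g (real n * r) = real n * g r" for n
    by (induction n) (auto simp: g0 distrib_right add)
  obtain n :: nat where "C / \<bar>g r\<bar> < real n" using reals_Archimedean2 by blast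
  then have "C < \<bar>g (real n * r)\<bar>" using ne unfolding gnat by (simp add: abs_mult field_simps)
  with bd show False by (simp add: not_le[symmetric])
qed

lemma additive_bounded_linear:
  fixes h :: "real \<Rightarrow> real"
  assumes add: "\<And>a b. h (a + b) = h a + h b"
    and bd: "\<And>r. 0 \<le> r \<Longrightarrow> r \<le> 1 \<Longrightarrow> \<bar>h r\<bar> \<le> C"
  shows "h r = r * h 1"
proof -
  define g where "g r = h r - r * h 1" for r
  have gadd: "g (a + b) = g a + g b" for a b by (simp add: g_def add algebra_simps)
  have g0: "g 0 = 0" using gadd[of 0 0] by simp
  have gnat: "g (real n) = 0" for n
    by (induction n) (simp_all add: g0 gadd, simp add: g_def)
  have gint: "g (of_int k) = 0" for k
  proof (cases "k \<ge> 0")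
    case True then show ?thesis using gnat[of "nat k"] by simp
  next
    case False then show ?thesis using gnat[of "nat (- k)"] gadd[of "of_int k" "- of_int k"] g0 by simp
  qed
  \<comment> \<open>\<open>g\<close> is \<open>1\<close>-periodic, hence bounded by its bound on \<open>[0, 1]\<close>.\<close>
  have "\<bar>g r\<bar> \<le> C + \<bar>h 1\<bar>" for r
  proof -
    define f where "f = r - of_int \<lfloor>r\<rfloor>"
    have f: "0 \<le> f" "f \<le> 1" using floor_correct[of r] unfolding f_def by linarith+
    have "g r = g f" using gadd[of f "of_int \<lfloor>r\<rfloor>"] gint by (simp add: f_def)
    also have "\<bar>g f\<bar> \<le> \<bar>h f\<bar> + f * \<bar>h 1\<bar>"
      unfolding g_def using f abs_triangle_ineq4[of "h f" "f * h 1"] by (simp add: abs_mult)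
    also have "\<dots> \<le> C + 1 * \<bar>h 1\<bar>" using bd[OF f] f by (intro add_mono mult_right_mono) auto
    finally show ?thesis by simp
  qed
  then have "g r = 0" by (rule additive_bounded_eq_zero[OF gadd])
  then show ?thesis by (simp add: g_def)
qed

lemma norm_parallelogram:
  fixes x y :: "'h::chilbert"
  shows "(norm (x + y))^2 + (norm (x - y))^2 = 2 * (norm x)^2 + 2 * (norm y)^2"
proof -
  have "(norm (x + y))^2 + (norm (x - y))^2 = Re (hinner (x + y) (x + y)) + Re (hinner (x - y) (x - y))"
    by (simp add: hinner_self_Re)
  also have "\<dots> = 2 * Re (hinner x x) + 2 * Re (hinner y y)"
    by (simp add: hinner_add_left hinner_add_right hinner_diff_left hinner_diff_right)
  finally show ?thesis by (simp add: hinner_self_Re)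
qed

locale quadratic_functional =
  fixes E :: "'h::chilbert set" and f :: "'h \<Rightarrow> real"
  assumes sub: "csubspace E"
    and hom: "\<And>a x. x \<in> E \<Longrightarrow> f (hscale a x) = (cmod a)^2 * f x"
    and par: "\<And>x y. x \<in> E \<Longrightarrow> y \<in> E \<Longrightarrow> f (x + y) + f (x - y) = 2 * f x + 2 * f y"
    and nonneg: "\<And>x. x \<in> E \<Longrightarrow> 0 \<le> f x"
begin

lemma E0: "0 \<in> E" and Eadd: "x \<in> E \<Longrightarrow> y \<in> E \<Longrightarrow> x + y \<in> E"
  and Ehs: "x \<in> E \<Longrightarrow> hscale a x \<in> E"
  and Ediff: "x \<in> E \<Longrightarrow> y \<in> E \<Longrightarrow> x - y \<in> E"
  and EscR: "x \<in> E \<Longrightarrow> scaleR r x \<in> E"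
  by (rule csubspace_0[OF sub] csubspace_add[OF sub] csubspace_hscale[OF sub]
      csubspace_diff[OF sub] csubspace_scaleR[OF sub]; assumption)+

lemma f_minus: "x \<in> E \<Longrightarrow> f (- x) = f x"
  using hom[of x "-1"] by (simp add: hscale_minus_one)

lemma f_zero: "f 0 = 0"
  using hom[OF E0, of 0] by simp

lemma f_scaleR: "x \<in> E \<Longrightarrow> f (scaleR r x) = r^2 * f x"
  using hom[of x "complex_of_real r"] by (simp add: hscale_of_real)

definition re_polar :: "'h \<Rightarrow> 'h \<Rightarrow> real" where
  "re_polar x y = (f (x + y) - f (x - y)) / 4"

lemma re_polar_sym: "x \<in> E \<Longrightarrow> y \<in> E \<Longrightarrow> re_polar x y = re_polar y x"
  unfolding re_polar_def using f_minus[OF Ediff, of x y] by (simp add: add.commute)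

lemma re_polar_self: "x \<in> E \<Longrightarrow> re_polar x x = f x"
  unfolding re_polar_def using f_scaleR[of x 2] f_zero by (simp add: scaleR_2)

lemma re_polar_zero: "y \<in> E \<Longrightarrow> re_polar 0 y = 0"
  unfolding re_polar_def using f_minus by simp

lemma re_polar_bound: "u \<in> E \<Longrightarrow> y \<in> E \<Longrightarrow> \<bar>re_polar u y\<bar> \<le> (f u + f y) / 2"
  unfolding re_polar_def using par[of u y] nonneg[OF Eadd, of u y] nonneg[OF Ediff, of u y] by auto

lemma re_polar_half:
  assumes x: "x \<in> E" and y: "y \<in> E" and z: "z \<in> E"
  shows "re_polar (x + z) y + re_polar (x - z) y = 2 * re_polar x y"
proof -
  have p1: "f (x + y + z) + f (x + y - z) = 2 * f (x + y) + 2 * f z"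
    using par[OF Eadd[OF x y] z] .
  have p2: "f (x - y + z) + f (x - y - z) = 2 * f (x - y) + 2 * f z"
    using par[OF Ediff[OF x y] z] .
  have a: "x + z + y = x + y + z" "x + z - y = x - y + z" "x - z + y = x + y - z" "x - z - y = x - y - z"
    by (simp_all add: algebra_simps)
  show ?thesis unfolding re_polar_def a using p1 p2 by argo
qed

lemma re_polar_add_left:
  assumes a: "a \<in> E" and b: "b \<in> E" and y: "y \<in> E"
  shows "re_polar (a + b) y = re_polar a y + re_polar b y"
proof -
  define x where "x = scaleR (1/2) (a + b)"
  define z where "z = scaleR (1/2) (a - b)"
  have xE: "x \<in> E" and zE: "z \<in> E" unfolding x_def z_def using a b by (auto intro: EscR Eadd Ediff)
  have "x + z = a" "x - z = b" "x + x = a + b" unfolding x_def z_def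
    by (simp_all add: algebra_simps flip: scaleR_add_right scaleR_diff_right)
      (simp_all add: scaleR_add_right scaleR_diff_right algebra_simps flip: scaleR_add_left)
  moreover have "re_polar (x + x) y = 2 * re_polar x y" using re_polar_half[OF xE y xE] re_polar_zero[OF y] by simp
  ultimately show ?thesis using re_polar_half[OF xE y zE] by simp
qed

lemma re_polar_scaleR_left:
  assumes x: "x \<in> E" and y: "y \<in> E"
  shows "re_polar (scaleR r x) y = r * re_polar x y"
proof -
  define h where "h r = re_polar (scaleR r x) y" for r
  have "h r = r * h 1"
  proof (rule additive_bounded_linear[where C = "(f x + f y) / 2"])
    show "h (a + b) = h a + h b" for a b
      unfolding h_def by (simp add: scaleR_add_left re_polar_add_left EscR x y)
    show "\<bar>h r\<bar> \<le> (f x + f y) / 2" if "0 \<le> r" "r \<le> 1" for r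
    proof -
      have "\<bar>h r\<bar> \<le> (r^2 * f x + f y) / 2"
        unfolding h_def using re_polar_bound[OF EscR[OF x] y, of r] f_scaleR[OF x, of r] by simp
      also have "\<dots> \<le> (f x + f y) / 2"
        using that nonneg[OF x] by (intro divide_right_mono add_right_mono mult_left_le_one_le) (auto simp: power_le_one)
      finally show ?thesis .
    qed
  qed
  then show ?thesis by (simp add: h_def)
qed

lemma hs_i_i: "hscale \<i> (hscale \<i> y) = - y"
  by (simp add: hscale_hscale hscale_minus_one)

lemma re_polar_ii: "x \<in> E \<Longrightarrow> y \<in> E \<Longrightarrow> re_polar (hscale \<i> x) (hscale \<i> y) = re_polar x y"
  unfolding re_polar_def using hom[of "x + y" \<i>] hom[of "x - y" \<i>] Eadd Ediff
  by (simp add: hscale_add_right hscale_diff_right)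

lemma re_polar_i_swap: "x \<in> E \<Longrightarrow> y \<in> E \<Longrightarrow> re_polar (hscale \<i> x) y = - re_polar x (hscale \<i> y)"
proof -
  assume x: "x \<in> E" and y: "y \<in> E"
  have iy: "hscale \<i> y \<in> E" by (rule Ehs[OF y])
  have 1: "hscale \<i> x + y = hscale \<i> (x - hscale \<i> y)"
    by (simp add: hscale_diff_right hs_i_i)
  have 2: "hscale \<i> x - y = hscale \<i> (x + hscale \<i> y)"
    by (simp add: hscale_add_right hs_i_i)
  have h1: "f (hscale \<i> (x - hscale \<i> y)) = f (x - hscale \<i> y)"
    using hom[OF Ediff[OF x iy], of \<i>] by simp
  have h2: "f (hscale \<i> (x + hscale \<i> y)) = f (x + hscale \<i> y)"
    using hom[OF Eadd[OF x iy], of \<i>] by simp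
  show ?thesis unfolding re_polar_def 1 2 using h1 h2 by argo
qed

lemma re_polar_neg_right: "re_polar x (- y) = - re_polar x y"
proof -
  have e: "f (x + - y) = f (x - y)" "f (x - - y) = f (x + y)" by simp_all
  show ?thesis unfolding re_polar_def e by argo
qed

definition polar :: "'h \<Rightarrow> 'h \<Rightarrow> complex" where
  "polar x y = complex_of_real (re_polar x y) + \<i> * complex_of_real (re_polar x (hscale \<i> y))"

lemma polar_add_left: "x \<in> E \<Longrightarrow> x' \<in> E \<Longrightarrow> y \<in> E \<Longrightarrow> polar (x + x') y = polar x y + polar x' y"
  unfolding polar_def by (simp add: re_polar_add_left Ehs algebra_simps)

lemma polar_scaleR_left: "x \<in> E \<Longrightarrow> y \<in> E \<Longrightarrow> polar (scaleR r x) y = complex_of_real r * polar x y"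
  unfolding polar_def by (simp add: re_polar_scaleR_left Ehs algebra_simps)

lemma polar_i_left: "x \<in> E \<Longrightarrow> y \<in> E \<Longrightarrow> polar (hscale \<i> x) y = \<i> * polar x y"
  unfolding polar_def by (simp add: re_polar_ii re_polar_i_swap Ehs hs_i_i re_polar_neg_right algebra_simps)

lemma hscale_decomp: "hscale a x = scaleR (Re a) x + scaleR (Im a) (hscale \<i> x)"
proof -
  have "a = complex_of_real (Re a) + complex_of_real (Im a) * \<i>" by (simp add: complex_eq_iff)
  then have "hscale a x = hscale (complex_of_real (Re a)) x + hscale (complex_of_real (Im a) * \<i>) x"
    by (metis hscale_add_left)
  also have "\<dots> = scaleR (Re a) x + scaleR (Im a) (hscale \<i> x)"
    by (simp add: hscale_of_real flip: hscale_hscale)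
  finally show ?thesis .
qed

lemma polar_hscale_left: "x \<in> E \<Longrightarrow> y \<in> E \<Longrightarrow> polar (hscale a x) y = a * polar x y"
proof -
  assume x: "x \<in> E" and y: "y \<in> E"
  have "polar (hscale a x) y = polar (scaleR (Re a) x) y + polar (scaleR (Im a) (hscale \<i> x)) y"
    unfolding hscale_decomp[of a x] by (rule polar_add_left) (auto intro: EscR Ehs x y)
  also have "\<dots> = complex_of_real (Re a) * polar x y + complex_of_real (Im a) * (\<i> * polar x y)"
    by (simp add: polar_scaleR_left polar_i_left Ehs x y)
  also have "\<dots> = a * polar x y"
    by (subst (3) complex_eq[of a]) (simp add: algebra_simps)
  finally show ?thesis .
qed

lemma polar_sym: "x \<in> E \<Longrightarrow> y \<in> E \<Longrightarrow> polar y x = cnj (polar x y)"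
  unfolding polar_def by (simp add: re_polar_sym[of x y] re_polar_sym[of y "hscale \<i> x"] re_polar_i_swap Ehs)

lemma polar_diag: "x \<in> E \<Longrightarrow> polar x x = complex_of_real (f x)"
proof -
  assume x: "x \<in> E"
  have a: "x + hscale \<i> x = hscale (1 + \<i>) x" "x - hscale \<i> x = hscale (1 - \<i>) x"
    by (simp_all add: hscale_add_left hscale_diff_left hscale_one)
  have c: "(cmod (1 + \<i>))^2 = 2" "(cmod (1 - \<i>))^2 = 2" by (simp_all add: cmod_def)
  have "re_polar x (hscale \<i> x) = 0" unfolding re_polar_def a using hom[OF x, of "1 + \<i>"] hom[OF x, of "1 - \<i>"] c by simp
  then show ?thesis unfolding polar_def using re_polar_self[OF x] by simp
qed

definition polar_form :: "'h form" where
  "polar_form = (E, \<lambda>x y. if x \<in> E \<and> y \<in> E then polar x y else 0)"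

lemma polar_form_simps: "dom_f polar_form = E" "x \<in> E \<Longrightarrow> y \<in> E \<Longrightarrow> val_f polar_form x y = polar x y"
  by (simp_all add: polar_form_def)

lemma polar_add_right: "x \<in> E \<Longrightarrow> x' \<in> E \<Longrightarrow> y \<in> E \<Longrightarrow> polar y (x + x') = polar y x + polar y x'"
  using polar_sym polar_add_left Eadd by (metis complex_cnj_add)

lemma polar_hscale_right: "x \<in> E \<Longrightarrow> y \<in> E \<Longrightarrow> polar y (hscale a x) = cnj a * polar y x"
  using polar_sym polar_hscale_left Ehs by (metis complex_cnj_mult)

lemma positive_polar_form:
  assumes "closure E = UNIV"
  shows "positive_f polar_form"
  unfolding positive_f_def is_form_def polar_form_simps(1)
  using sub assms
  by (auto simp: polar_form_def polar_add_left polar_add_right polar_hscale_left polar_hscale_right Eadd Ehs polar_diag nonneg)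

lemma quad_f_polar_form: "x \<in> E \<Longrightarrow> quad_f polar_form x = f x"
  by (simp add: quad_f_def polar_form_simps polar_diag)

end

section \<open>The lower semicontinuous envelope of a positive form\<close>

text \<open>\<open>lsc_env t\<close> is the lower semicontinuous envelope of the function that is \<open>t[\<cdot>]\<close> on \<open>D(t)\<close>
  and \<open>+\<infinity>\<close> elsewhere; it is finite exactly on \<open>lsc_dom t\<close>, where it turns out to be the
  quadratic form of the closure of \<open>t\<close>.\<close>

definition inf_near :: "'h::chilbert form \<Rightarrow> 'h \<Rightarrow> real \<Rightarrow> real" where
  "inf_near t x e = Inf {quad_f t z | z. z \<in> dom_f t \<and> dist z x < e}"

definition lsc_env :: "'h::chilbert form \<Rightarrow> 'h \<Rightarrow> real" where
  "lsc_env t x = Sup {inf_near t x e | e. e > 0}"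

definition lsc_dom :: "'h::chilbert form \<Rightarrow> 'h set" where
  "lsc_dom t = {x. bdd_above {inf_near t x e | e. e > 0}}"

lemma dist_hscale: "dist (hscale a z) (hscale a x) = cmod a * dist z x"
  by (simp add: dist_norm norm_hscale flip: hscale_diff_right)

context
  fixes t :: "'h::chilbert form"
  assumes P: "positive_f t"
begin

lemma dense_dom: "closure (dom_f t) = UNIV"
  using is_formD(2)[OF pos_form[OF P]] .

lemma dom_f_approx: "e > 0 \<Longrightarrow> \<exists>z\<in>dom_f t. dist z x < e"
  using dense_dom closure_approachable[of x "dom_f t"] by auto

lemma inf_near_ne: "e > 0 \<Longrightarrow> {quad_f t z | z. z \<in> dom_f t \<and> dist z x < e} \<noteq> {}"
  using dom_f_approx by blast

lemma inf_near_bdd: "bdd_below {quad_f t z | z. z \<in> dom_f t \<and> dist z x < e}"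
  using quad_f_nonneg[OF P] by (auto intro!: bdd_belowI[of _ 0])

lemma inf_near_le: "z \<in> dom_f t \<Longrightarrow> dist z x < e \<Longrightarrow> inf_near t x e \<le> quad_f t z"
  unfolding inf_near_def by (rule cInf_lower[OF _ inf_near_bdd]) blast

lemma inf_near_greatest: "e > 0 \<Longrightarrow> (\<And>z. z \<in> dom_f t \<Longrightarrow> dist z x < e \<Longrightarrow> M \<le> quad_f t z) \<Longrightarrow> M \<le> inf_near t x e"
  unfolding inf_near_def by (rule cInf_greatest[OF inf_near_ne]) auto

lemma inf_near_nonneg: "e > 0 \<Longrightarrow> 0 \<le> inf_near t x e"
  by (rule inf_near_greatest) (auto simp: quad_f_nonneg[OF P])

lemma inf_near_shift: "e' > 0 \<Longrightarrow> dist y x + e' \<le> e \<Longrightarrow> inf_near t x e \<le> inf_near t y e'"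
proof (rule inf_near_greatest)
  fix z assume "e' > 0" "dist y x + e' \<le> e" "z \<in> dom_f t" "dist z y < e'"
  moreover have "dist z x \<le> dist z y + dist y x" by (rule dist_triangle)
  ultimately show "inf_near t x e \<le> quad_f t z" by (intro inf_near_le) auto
qed

lemma inf_near_mono: "0 < e \<Longrightarrow> e \<le> e' \<Longrightarrow> inf_near t x e' \<le> inf_near t x e"
  using inf_near_shift[of e x x e'] by simp

lemma lsc_env_set_ne: "{inf_near t x e | e. e > 0} \<noteq> {}"
  by (auto intro: exI[of _ 1])

lemma lsc_env_upper: "x \<in> lsc_dom t \<Longrightarrow> e > 0 \<Longrightarrow> inf_near t x e \<le> lsc_env t x"
  unfolding lsc_env_def lsc_dom_def by (rule cSup_upper) auto

lemma lsc_env_least: "(\<And>e. e > 0 \<Longrightarrow> inf_near t x e \<le> M) \<Longrightarrow> x \<in> lsc_dom t \<and> lsc_env t x \<le> M"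
proof
  assume h: "\<And>e. e > 0 \<Longrightarrow> inf_near t x e \<le> M"
  show "x \<in> lsc_dom t" unfolding lsc_dom_def using h by (auto intro!: bdd_aboveI[of _ M])
  show "lsc_env t x \<le> M" unfolding lsc_env_def by (rule cSup_least[OF lsc_env_set_ne]) (auto intro: h)
qed

lemma lsc_env_nonneg: "x \<in> lsc_dom t \<Longrightarrow> 0 \<le> lsc_env t x"
  using lsc_env_upper[of x 1] inf_near_nonneg[of 1 x] by simp

lemma lsc_env_le_quad_f: "x \<in> dom_f t \<Longrightarrow> x \<in> lsc_dom t \<and> lsc_env t x \<le> quad_f t x"
  by (rule lsc_env_least) (simp add: inf_near_le)

lemma le_lsc_env_if_local_bound:
  assumes x: "x \<in> lsc_dom t" and "e > 0" and "\<And>z. z \<in> dom_f t \<Longrightarrow> dist z x < e \<Longrightarrow> M \<le> quad_f t z"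
  shows "M \<le> lsc_env t x"
proof -
  have "M \<le> inf_near t x e" by (rule inf_near_greatest[OF assms(2)]) (rule assms(3))
  then show ?thesis using lsc_env_upper[OF x assms(2)] by simp
qed

lemma lsc_env_zero: "0 \<in> lsc_dom t \<and> lsc_env t 0 = 0"
  using lsc_env_le_quad_f[OF fdom_0[OF pos_form[OF P]]] lsc_env_nonneg quad_f_zero[OF P] by force

lemma inf_near_hscale_le:
  assumes a: "a \<noteq> 0" and e: "e > 0"
  shows "inf_near t (hscale a x) (cmod a * e) \<le> (cmod a)^2 * inf_near t x e"
proof -
  have ca: "(cmod a)^2 > 0" using a by simp
  have "inf_near t (hscale a x) (cmod a * e) / (cmod a)^2 \<le> inf_near t x e"
  proof (rule inf_near_greatest[OF e])
    fix z assume z: "z \<in> dom_f t" "dist z x < e"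
    have "inf_near t (hscale a x) (cmod a * e) \<le> quad_f t (hscale a z)"
      using z a by (intro inf_near_le) (auto simp: fdom_hscale[OF pos_form[OF P]] dist_hscale)
    also have "\<dots> = (cmod a)^2 * quad_f t z" by (rule quad_f_hscale[OF P])
    finally show "inf_near t (hscale a x) (cmod a * e) / (cmod a)^2 \<le> quad_f t z"
      using ca by (simp add: field_simps)
  qed
  then show ?thesis using ca by (simp add: field_simps)
qed

lemma lsc_env_hscale_le:
  assumes a: "a \<noteq> 0" and x: "x \<in> lsc_dom t"
  shows "hscale a x \<in> lsc_dom t \<and> lsc_env t (hscale a x) \<le> (cmod a)^2 * lsc_env t x"
proof (rule lsc_env_least)
  fix e :: real assume e: "e > 0"
  have ca: "cmod a > 0" using a by simp
  have "inf_near t (hscale a x) e = inf_near t (hscale a x) (cmod a * (e / cmod a))" using ca by simp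
  also have "\<dots> \<le> (cmod a)^2 * inf_near t x (e / cmod a)" by (rule inf_near_hscale_le[OF a]) (use e ca in simp)
  also have "\<dots> \<le> (cmod a)^2 * lsc_env t x" using lsc_env_upper[OF x] e ca by (intro mult_left_mono) auto
  finally show "inf_near t (hscale a x) e \<le> (cmod a)^2 * lsc_env t x" .
qed

lemma lsc_env_hscale:
  assumes x: "x \<in> lsc_dom t"
  shows "hscale a x \<in> lsc_dom t \<and> lsc_env t (hscale a x) = (cmod a)^2 * lsc_env t x"
proof (cases "a = 0")
  case True then show ?thesis using lsc_env_zero by simp
next
  case False
  have 1: "hscale a x \<in> lsc_dom t" "lsc_env t (hscale a x) \<le> (cmod a)^2 * lsc_env t x"
    using lsc_env_hscale_le[OF False x] by auto
  have "lsc_env t (hscale (inverse a) (hscale a x)) \<le> (cmod (inverse a))^2 * lsc_env t (hscale a x)"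
    using lsc_env_hscale_le[OF _ 1(1), of "inverse a"] False by simp
  then have "lsc_env t x \<le> (inverse (cmod a))^2 * lsc_env t (hscale a x)"
    using False by (simp add: hscale_hscale hscale_one norm_inverse)
  then have "(cmod a)^2 * lsc_env t x \<le> lsc_env t (hscale a x)"
    using False by (simp add: field_simps power_inverse)
  then show ?thesis using 1 by simp
qed

lemma inf_near_par:
  assumes e: "e > 0"
  shows "inf_near t (x + y) e + inf_near t (x - y) e \<le> 2 * inf_near t x (e/2) + 2 * inf_near t y (e/2)"
proof -
  have F: "is_form t" by (rule pos_form[OF P])
  have e2: "e / 2 > 0" using e by simp
  have key: "inf_near t (x + y) e + inf_near t (x - y) e \<le> 2 * quad_f t z1 + 2 * quad_f t z2"
    if z1: "z1 \<in> dom_f t" "dist z1 x < e/2" and z2: "z2 \<in> dom_f t" "dist z2 y < e/2" for z1 z2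
  proof -
    have eq: "z1 + z2 - (x + y) = (z1 - x) + (z2 - y)" by (simp add: algebra_simps)
    have "dist (z1 + z2) (x + y) \<le> dist z1 x + dist z2 y"
      unfolding dist_norm eq by (rule norm_triangle_ineq)
    then have d1: "dist (z1 + z2) (x + y) < e" using z1 z2 by simp
    have eq2: "z1 - z2 - (x - y) = (z1 - x) - (z2 - y)" by (simp add: algebra_simps)
    have "dist (z1 - z2) (x - y) \<le> dist z1 x + dist z2 y"
      unfolding dist_norm eq2 by (rule norm_triangle_ineq4)
    then have d2: "dist (z1 - z2) (x - y) < e" using z1 z2 by simp
    have "inf_near t (x + y) e + inf_near t (x - y) e \<le> quad_f t (z1 + z2) + quad_f t (z1 - z2)"
      using inf_near_le[OF fdom_add[OF F z1(1) z2(1)] d1] inf_near_le[OF fdom_diff[OF F z1(1) z2(1)] d2] by simp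
    also have "\<dots> = 2 * quad_f t z1 + 2 * quad_f t z2" by (rule quad_f_parallelogram[OF P z1(1) z2(1)])
    finally show ?thesis .
  qed
  have step: "(inf_near t (x + y) e + inf_near t (x - y) e - 2 * quad_f t z2) / 2 \<le> inf_near t x (e/2)"
    if z2: "z2 \<in> dom_f t" "dist z2 y < e/2" for z2
  proof (rule inf_near_greatest[OF e2])
    fix z assume "z \<in> dom_f t" "dist z x < e/2"
    then have "inf_near t (x + y) e + inf_near t (x - y) e \<le> 2 * quad_f t z + 2 * quad_f t z2" by (rule key[OF _ _ z2])
    then show "(inf_near t (x + y) e + inf_near t (x - y) e - 2 * quad_f t z2) / 2 \<le> quad_f t z" by simp
  qed
  have "(inf_near t (x + y) e + inf_near t (x - y) e - 2 * inf_near t x (e/2)) / 2 \<le> inf_near t y (e/2)"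
  proof (rule inf_near_greatest[OF e2])
    fix z assume "z \<in> dom_f t" "dist z y < e/2"
    then have "(inf_near t (x + y) e + inf_near t (x - y) e - 2 * quad_f t z) / 2 \<le> inf_near t x (e/2)" by (rule step)
    then show "(inf_near t (x + y) e + inf_near t (x - y) e - 2 * inf_near t x (e/2)) / 2 \<le> quad_f t z" by simp
  qed
  then show ?thesis by simp
qed

lemma lsc_env_par_le:
  assumes x: "x \<in> lsc_dom t" and y: "y \<in> lsc_dom t"
  shows "x + y \<in> lsc_dom t \<and> x - y \<in> lsc_dom t \<and> lsc_env t (x + y) + lsc_env t (x - y) \<le> 2 * lsc_env t x + 2 * lsc_env t y"
proof -
  have b: "inf_near t (x + y) e1 + inf_near t (x - y) e2 \<le> 2 * lsc_env t x + 2 * lsc_env t y"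
    if "e1 > 0" "e2 > 0" for e1 e2
  proof -
    define m where "m = min e1 e2"
    have m: "m > 0" "m \<le> e1" "m \<le> e2" using that by (auto simp: m_def)
    have "inf_near t (x + y) e1 + inf_near t (x - y) e2 \<le> inf_near t (x + y) m + inf_near t (x - y) m"
      using inf_near_mono m by (intro add_mono) auto
    also have "\<dots> \<le> 2 * inf_near t x (m/2) + 2 * inf_near t y (m/2)" by (rule inf_near_par[OF m(1)])
    also have "\<dots> \<le> 2 * lsc_env t x + 2 * lsc_env t y"
      using lsc_env_upper[OF x, of "m/2"] lsc_env_upper[OF y, of "m/2"] m by simp
    finally show ?thesis .
  qed
  have 1: "x + y \<in> lsc_dom t \<and> lsc_env t (x + y) \<le> 2 * lsc_env t x + 2 * lsc_env t y - inf_near t (x - y) e2" if "e2 > 0" for e2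
    by (rule lsc_env_least) (use b[OF _ that] in force)
  have 2: "x - y \<in> lsc_dom t \<and> lsc_env t (x - y) \<le> 2 * lsc_env t x + 2 * lsc_env t y - lsc_env t (x + y)"
    by (rule lsc_env_least) (use 1 in force)
  show ?thesis using 1[of 1] 2 by simp
qed

lemma lsc_env_par:
  assumes x: "x \<in> lsc_dom t" and y: "y \<in> lsc_dom t"
  shows "lsc_env t (x + y) + lsc_env t (x - y) = 2 * lsc_env t x + 2 * lsc_env t y"
proof -
  have a: "x + y \<in> lsc_dom t" "x - y \<in> lsc_dom t" using lsc_env_par_le[OF x y] by auto
  have "lsc_env t ((x + y) + (x - y)) + lsc_env t ((x + y) - (x - y)) \<le> 2 * lsc_env t (x + y) + 2 * lsc_env t (x - y)"
    using lsc_env_par_le[OF a] by simp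
  moreover have "(x + y) + (x - y) = hscale 2 x" "(x + y) - (x - y) = hscale 2 y"
    using hscale_of_real[of 2 x] hscale_of_real[of 2 y] by (simp_all add: scaleR_2)
  moreover have "lsc_env t (hscale 2 x) = 4 * lsc_env t x" "lsc_env t (hscale 2 y) = 4 * lsc_env t y"
    using lsc_env_hscale[OF x, of 2] lsc_env_hscale[OF y, of 2] by simp_all
  ultimately have "4 * lsc_env t x + 4 * lsc_env t y \<le> 2 * lsc_env t (x + y) + 2 * lsc_env t (x - y)" by simp
  then show ?thesis using lsc_env_par_le[OF x y] by simp
qed

lemma quadratic_functional_env: "quadratic_functional (lsc_dom t) (lsc_env t)"
proof
  show "csubspace (lsc_dom t)" unfolding csubspace_def
  proof (intro conjI ballI allI)
    show "0 \<in> lsc_dom t" using lsc_env_zero by simp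
    show "x + y \<in> lsc_dom t" if "x \<in> lsc_dom t" "y \<in> lsc_dom t" for x y using lsc_env_par_le[OF that] by simp
    show "hscale a x \<in> lsc_dom t" if "x \<in> lsc_dom t" for a x using lsc_env_hscale[OF that] by simp
  qed
  show "lsc_env t (hscale a x) = (cmod a)^2 * lsc_env t x" if "x \<in> lsc_dom t" for a x
    using lsc_env_hscale[OF that] by simp
  show "lsc_env t (x + y) + lsc_env t (x - y) = 2 * lsc_env t x + 2 * lsc_env t y" if "x \<in> lsc_dom t" "y \<in> lsc_dom t" for x y
    by (rule lsc_env_par[OF that])
  show "0 \<le> lsc_env t x" if "x \<in> lsc_dom t" for x by (rule lsc_env_nonneg[OF that])
qed

lemma lsc_env_limit_le:
  assumes Y: "\<And>m. Y m \<in> lsc_dom t" and lim: "Y \<longlonglongrightarrow> y" and ev: "eventually (\<lambda>m. lsc_env t (Y m) \<le> M) sequentially"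
  shows "y \<in> lsc_dom t \<and> lsc_env t y \<le> M"
proof (rule lsc_env_least)
  fix e :: real assume e: "e > 0"
  have "eventually (\<lambda>m. dist (Y m) y < e/2) sequentially"
    using tendstoD[OF lim, of "e/2"] e by simp
  with ev have "eventually (\<lambda>m. dist (Y m) y < e/2 \<and> lsc_env t (Y m) \<le> M) sequentially"
    by (rule eventually_conj[rotated])
  then obtain m where m: "dist (Y m) y < e/2" "lsc_env t (Y m) \<le> M"
    by (auto simp: eventually_sequentially)
  have "inf_near t y e \<le> inf_near t (Y m) (e/2)" using m e by (intro inf_near_shift) auto
  also have "\<dots> \<le> lsc_env t (Y m)" using lsc_env_upper[OF Y] e by simp
  finally show "inf_near t y e \<le> M" using m by simp
qed

lemma lsc_env_limit_diff_le:
  assumes XD: "\<And>n. X n \<in> lsc_dom t" and lim: "X \<longlonglongrightarrow> x"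
    and le: "\<And>m n. N \<le> m \<Longrightarrow> N \<le> n \<Longrightarrow> lsc_env t (X n - X m) \<le> M" and n: "N \<le> n"
  shows "X n - x \<in> lsc_dom t \<and> lsc_env t (X n - x) \<le> M"
proof (rule lsc_env_limit_le)
  show "X n - X m \<in> lsc_dom t" for m using XD quadratic_functional.Ediff[OF quadratic_functional_env] by blast
  show "(\<lambda>m. X n - X m) \<longlonglongrightarrow> X n - x" by (intro tendsto_diff tendsto_const lim)
  show "eventually (\<lambda>m. lsc_env t (X n - X m) \<le> M) sequentially"
    using le n by (auto simp: eventually_sequentially)
qed
end

text \<open>The hypothesis \<open>v \<noteq> 0\<close> below only ensures that unit vectors exist: otherwise \<open>m_f s\<close>
  is the junk value \<open>Inf {}\<close>.\<close>

lemma dom_unit: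
  fixes s :: "'h::chilbert form"
  assumes P: "positive_f s" and v: "(v::'h::chilbert) \<noteq> 0"
  shows "\<exists>x\<in>dom_f s. norm x = 1"
proof -
  obtain z :: 'h where z: "z \<in> dom_f s" "dist z v < norm v" using dom_f_approx[OF P, of "norm v" v] v by auto
  have "z \<noteq> 0" using z(2) by auto
  then have "norm (hscale (complex_of_real (1 / norm z)) z) = 1" by (simp add: norm_hscale norm_divide)
  moreover have "hscale (complex_of_real (1 / norm z)) z \<in> dom_f s"
    by (rule fdom_hscale[OF pos_form[OF P] z(1)])
  ultimately show ?thesis by blast
qed

lemma m_f_nonneg:
  fixes s :: "'h::chilbert form"
  assumes P: "positive_f s" and v: "(v::'h::chilbert) \<noteq> 0"
  shows "0 \<le> m_f s"
proof -
  obtain x where x: "x \<in> dom_f s" "norm x = 1" using dom_unit[OF P v] by blast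
  show ?thesis unfolding m_f_def
    by (rule cInf_greatest) (use x in \<open>auto simp: quad_f_nonneg[OF P, unfolded quad_f_def]\<close>)
qed

lemma tnorm_qf: "tnorm s x = sqrt (quad_f s x + (1 + m_f s) * (norm x)^2)"
  by (simp add: tnorm_def quad_f_def)

lemma tnorm_tendsto_zero:
  assumes "(\<lambda>n. quad_f s (Y n)) \<longlonglongrightarrow> 0" and "Y \<longlonglongrightarrow> 0"
  shows "(\<lambda>n. tnorm s (Y n)) \<longlonglongrightarrow> 0"
proof -
  have "(\<lambda>n. norm (Y n)) \<longlonglongrightarrow> 0" using tendsto_norm_zero[OF assms(2)] .
  then have "(\<lambda>n. sqrt (quad_f s (Y n) + (1 + m_f s) * (norm (Y n))^2))
      \<longlonglongrightarrow> sqrt (0 + (1 + m_f s) * 0^2)"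
    by (intro tendsto_intros assms(1))
  then show ?thesis by (simp add: tnorm_qf)
qed

context
  fixes s :: "'h::chilbert form" and v :: 'h
  assumes P: "positive_f s" and v: "v \<noteq> 0"
begin

lemma tnorm_sq: "(tnorm s x)^2 = quad_f s x + (1 + m_f s) * (norm x)^2"
proof -
  have h: "0 \<le> quad_f s x + (1 + m_f s) * (norm x)^2"
    using quad_f_nonneg[OF P, of x] m_f_nonneg[OF P v] by (intro add_nonneg_nonneg mult_nonneg_nonneg) auto
  show ?thesis unfolding tnorm_qf using h by (rule real_sqrt_pow2)
qed

lemma tnorm_nonneg: "0 \<le> tnorm s x"
  unfolding tnorm_qf using quad_f_nonneg[OF P, of x] m_f_nonneg[OF P v] by simp

lemma norm_le_tnorm: "norm x \<le> tnorm s x"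
proof -
  have "(norm x)^2 \<le> (tnorm s x)^2"
    unfolding tnorm_sq using quad_f_nonneg[OF P, of x] mult_nonneg_nonneg[OF m_f_nonneg[OF P v] zero_le_power2[of "norm x"]]
    by (simp add: distrib_right)
  then show ?thesis by (rule power2_le_imp_le) (rule tnorm_nonneg)
qed

lemma quad_f_le_tnorm: "quad_f s x \<le> (tnorm s x)^2"
  unfolding tnorm_sq using m_f_nonneg[OF P v] by simp

lemma Cauchy_if_tnorm_Cauchy:
  assumes "\<forall>e>0. \<exists>N. \<forall>m\<ge>N. \<forall>n\<ge>N. tnorm s (X m - X n) < e"
  shows "Cauchy X"
  unfolding Cauchy_def
proof (intro allI impI)
  fix e :: real assume "e > 0"
  then obtain N where "\<forall>m\<ge>N. \<forall>n\<ge>N. tnorm s (X m - X n) < e" using assms by blast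
  then show "\<exists>M. \<forall>m\<ge>M. \<forall>n\<ge>M. dist (X m) (X n) < e"
    using norm_le_tnorm by (intro exI[of _ N]) (auto simp: dist_norm intro: le_less_trans)
qed

lemma tnorm_Cauchy:
  assumes "\<forall>e>0. \<exists>N. \<forall>m\<ge>N. \<forall>n\<ge>N. quad_f s (w m - w n) + (norm (w m - w n))^2 < e"
  shows "\<forall>e>0. \<exists>N. \<forall>m\<ge>N. \<forall>n\<ge>N. tnorm s (w m - w n) < e"
proof (intro allI impI)
  fix e :: real assume e: "e > 0"
  define c where "c = 1 + m_f s"
  have c: "c \<ge> 1" using m_f_nonneg[OF P v] by (simp add: c_def)
  obtain N where N: "\<forall>m\<ge>N. \<forall>n\<ge>N. quad_f s (w m - w n) + (norm (w m - w n))^2 < e^2 / c"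
    using assms e c by (meson divide_pos_pos order_less_le_trans zero_less_one zero_less_power)
  have "tnorm s (w m - w n) < e" if "m \<ge> N" "n \<ge> N" for m n
  proof -
    have "(tnorm s (w m - w n))^2 \<le> c * (quad_f s (w m - w n) + (norm (w m - w n))^2)"
      using c quad_f_nonneg[OF P, of "w m - w n"] unfolding tnorm_sq c_def[symmetric]
      by (simp add: distrib_left mult_le_cancel_right1)
    also have "\<dots> < c * (e^2 / c)" using N that c by (intro mult_strict_left_mono) auto
    also have "\<dots> = e^2" using c by simp
    finally show ?thesis using e tnorm_nonneg by (simp add: power_less_imp_less_base)
  qed
  then show "\<exists>N. \<forall>m\<ge>N. \<forall>n\<ge>N. tnorm s (w m - w n) < e" by blast
qed

end

definition restrict_f :: "'h::chilbert form \<Rightarrow> 'h set \<Rightarrow> 'h form" where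
  "restrict_f s D = (D, \<lambda>x y. if x \<in> D \<and> y \<in> D then val_f s x y else 0)"

lemma restrict_f_simps: "dom_f (restrict_f s D) = D" "x \<in> D \<Longrightarrow> y \<in> D \<Longrightarrow> val_f (restrict_f s D) x y = val_f s x y"
  by (simp_all add: restrict_f_def)

lemma quad_f_restrict_f: "x \<in> D \<Longrightarrow> quad_f (restrict_f s D) x = quad_f s x"
  by (simp add: quad_f_def restrict_f_simps)

lemma positive_restrict_f:
  assumes P: "positive_f s" and D: "csubspace D" "D \<subseteq> dom_f s" "closure D = UNIV"
  shows "positive_f (restrict_f s D)"
proof -
  have F: "is_form s" by (rule pos_form[OF P])
  have in_s: "x \<in> D \<Longrightarrow> x \<in> dom_f s" for x using D(2) by auto
  have Dadd: "x \<in> D \<Longrightarrow> y \<in> D \<Longrightarrow> x + y \<in> D" and Dhs: "x \<in> D \<Longrightarrow> hscale a x \<in> D" for x y a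
    using csubspace_add[OF D(1)] csubspace_hscale[OF D(1)] by blast+
  show ?thesis
    unfolding positive_f_def is_form_def restrict_f_simps(1)
  proof (intro conjI allI ballI impI D(1) D(3))
    fix x y assume "\<not> (x \<in> D \<and> y \<in> D)" then show "val_f (restrict_f s D) x y = 0" by (auto simp: restrict_f_def)
  next
    fix x x' y assume h: "x \<in> D" "x' \<in> D" "y \<in> D"
    show "val_f (restrict_f s D) (x + x') y = val_f (restrict_f s D) x y + val_f (restrict_f s D) x' y"
      using h Dadd[OF h(1,2)] by (simp add: restrict_f_simps fval_add_left[OF F] in_s)
    show "val_f (restrict_f s D) y (x + x') = val_f (restrict_f s D) y x + val_f (restrict_f s D) y x'"
      using h Dadd[OF h(1,2)] by (simp add: restrict_f_simps fval_add_right[OF F] in_s)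
  next
    fix a x y assume h: "x \<in> D" "y \<in> D"
    show "val_f (restrict_f s D) (hscale a x) y = a * val_f (restrict_f s D) x y"
      using h Dhs[OF h(1)] by (simp add: restrict_f_simps fval_hscale_left[OF F] in_s)
    show "val_f (restrict_f s D) y (hscale a x) = cnj a * val_f (restrict_f s D) y x"
      using h Dhs[OF h(1)] by (simp add: restrict_f_simps fval_hscale_right[OF F] in_s)
  next
    fix x assume h: "x \<in> D"
    show "Im (val_f (restrict_f s D) x x) = 0" "0 \<le> Re (val_f (restrict_f s D) x x)"
      using h P in_s[OF h] by (auto simp: restrict_f_simps positive_f_def)
  qed
qed

lemma extends_restrict_f: "D \<subseteq> dom_f s \<Longrightarrow> extends_f s (restrict_f s D)"
  by (simp add: extends_f_def restrict_f_simps)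

definition lsc_env_form :: "'h::chilbert form \<Rightarrow> 'h form" where
  "lsc_env_form t = quadratic_functional.polar_form (lsc_dom t) (lsc_env t)"

context
  fixes t :: "'h::chilbert form" and v :: 'h
  assumes P: "positive_f t" and v: "v \<noteq> 0"
begin

lemma lsc_dom_dense: "closure (lsc_dom t) = UNIV"
proof -
  have "dom_f t \<subseteq> lsc_dom t" using lsc_env_le_quad_f[OF P] by auto
  then have "closure (dom_f t) \<subseteq> closure (lsc_dom t)" by (rule closure_mono)
  then show ?thesis using dense_dom[OF P] by auto
qed

lemma lsc_env_form_eq: "lsc_env_form t = quadratic_functional.polar_form (lsc_dom t) (lsc_env t)"
  by (simp add: lsc_env_form_def)

lemma lsc_env_form_pos: "positive_f (lsc_env_form t)"
  unfolding lsc_env_form_eq using quadratic_functional.positive_polar_form[OF quadratic_functional_env[OF P] lsc_dom_dense] .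

lemma lsc_env_form_dom: "dom_f (lsc_env_form t) = lsc_dom t"
  unfolding lsc_env_form_eq using quadratic_functional.polar_form_simps(1)[OF quadratic_functional_env[OF P]] .

lemma quad_f_lsc_env_form: "x \<in> lsc_dom t \<Longrightarrow> quad_f (lsc_env_form t) x = lsc_env t x"
  unfolding lsc_env_form_eq using quadratic_functional.quad_f_polar_form[OF quadratic_functional_env[OF P]] .

lemma lsc_env_form_closed: "closed_f (lsc_env_form t)"
  unfolding closed_f_def
proof (intro conjI allI impI lsc_env_form_pos)
  let ?F = "lsc_env_form t"
  have PF: "positive_f ?F" by (rule lsc_env_form_pos)
  have diff: "x \<in> lsc_dom t \<Longrightarrow> y \<in> lsc_dom t \<Longrightarrow> x - y \<in> lsc_dom t" for x y
    by (rule quadratic_functional.Ediff[OF quadratic_functional_env[OF P]])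
  fix X :: "nat \<Rightarrow> 'h"
  assume "(\<forall>n. X n \<in> dom_f ?F) \<and> (\<forall>e>0. \<exists>N. \<forall>m\<ge>N. \<forall>n\<ge>N. tnorm ?F (X m - X n) < e)"
  then have XD: "\<And>n. X n \<in> lsc_dom t"
    and XC: "\<And>e. e > 0 \<Longrightarrow> \<exists>N. \<forall>m\<ge>N. \<forall>n\<ge>N. tnorm ?F (X m - X n) < e"
    and "Cauchy X"
    using Cauchy_if_tnorm_Cauchy[OF PF v] by (auto simp: lsc_env_form_dom)
  then obtain x where lim: "X \<longlonglongrightarrow> x" using Cauchy_convergent_iff convergent_def by blast
  have tail: "\<exists>N. \<forall>n\<ge>N. X n - x \<in> lsc_dom t \<and> lsc_env t (X n - x) \<le> e^2" if e: "e > 0" for e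
  proof -
    obtain N where N: "\<forall>m\<ge>N. \<forall>n\<ge>N. tnorm ?F (X m - X n) < e" using XC[OF e] by blast
    have "lsc_env t (X n - X m) \<le> e^2" if "N \<le> m" "N \<le> n" for m n
    proof -
      have "lsc_env t (X n - X m) = quad_f ?F (X n - X m)" using quad_f_lsc_env_form diff XD by simp
      also have "\<dots> \<le> (tnorm ?F (X n - X m))^2" by (rule quad_f_le_tnorm[OF PF v])
      also have "\<dots> \<le> e^2"
        using N that tnorm_nonneg[OF PF v] by (intro power_mono) (auto intro: less_imp_le)
      finally show ?thesis .
    qed
    then show ?thesis using lsc_env_limit_diff_le[OF P XD lim] by blast
  qed
  then obtain N where "X N - x \<in> lsc_dom t" by (meson order_refl zero_less_one)
  then have xD: "x \<in> lsc_dom t" using diff[OF XD[of N]] by force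
  have "(\<lambda>n. quad_f ?F (X n - x)) \<longlonglongrightarrow> 0"
  proof (rule LIMSEQ_I)
    fix r :: real assume "r > 0"
    then obtain N where N: "\<forall>n\<ge>N. X n - x \<in> lsc_dom t \<and> lsc_env t (X n - x) \<le> (sqrt (r/2))^2"
      using tail[of "sqrt (r/2)"] by auto
    have "norm (quad_f ?F (X n - x) - 0) < r" if "n \<ge> N" for n
      using N that \<open>r > 0\<close> quad_f_lsc_env_form lsc_env_nonneg[OF P] by auto
    then show "\<exists>N. \<forall>n\<ge>N. norm (quad_f ?F (X n - x) - 0) < r" by blast
  qed
  then have "(\<lambda>n. tnorm ?F (X n - x)) \<longlonglongrightarrow> 0"
    by (rule tnorm_tendsto_zero[OF _ LIM_zero[OF lim]])
  then show "\<exists>x\<in>dom_f ?F. (\<lambda>n. tnorm ?F (X n - x)) \<longlonglongrightarrow> 0"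
    using xD lsc_env_form_dom by auto
qed

text \<open>\<open>env_part\<close> is the regular part \<open>t\<^sub>r\<close> of \<open>t\<close>, see \<open>regular_part_eq\<close>.\<close>

definition env_part :: "'h form" where
  "env_part = restrict_f (lsc_env_form t) (dom_f t)"

lemma env_part_props:
  "positive_f env_part" "closable_f env_part" "dom_f env_part = dom_f t"
  "\<And>x. x \<in> dom_f t \<Longrightarrow> quad_f env_part x = lsc_env t x"
proof -
  have sub: "dom_f t \<subseteq> dom_f (lsc_env_form t)" using lsc_env_le_quad_f[OF P] lsc_env_form_dom by auto
  show "positive_f env_part" unfolding env_part_def
    by (rule positive_restrict_f[OF lsc_env_form_pos is_formD(1)[OF pos_form[OF P]] sub dense_dom[OF P]])
  show "closable_f env_part" unfolding closable_f_def env_part_def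
    using lsc_env_form_closed extends_restrict_f[OF sub] by blast
  show "dom_f env_part = dom_f t" by (simp add: env_part_def restrict_f_simps)
  show "quad_f env_part x = lsc_env t x" if "x \<in> dom_f t" for x
    using that quad_f_restrict_f[OF that] quad_f_lsc_env_form lsc_env_le_quad_f[OF P] by (simp add: env_part_def)
qed

end

section \<open>Closed forms are lower semicontinuous\<close>

lemma LIMSEQ_one_over_Suc: "(\<lambda>n. 1 / real (Suc n)) \<longlonglongrightarrow> 0"
  using LIMSEQ_inverse_real_of_nat by (simp add: inverse_eq_divide)

lemma parallelogram_minimizing_seq:
  fixes p :: "'a::real_vector \<Rightarrow> real" and K :: "nat \<Rightarrow> 'a set"
  assumes par: "\<And>u w. u \<in> K 0 \<Longrightarrow> w \<in> K 0 \<Longrightarrow> p (u + w) + p (u - w) = 2 * p u + 2 * p w"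
    and half: "\<And>u. p (scaleR (1/2) u) = p u / 4"
    and nonneg: "\<And>u. 0 \<le> p u" and sym: "\<And>u. p (- u) = p u"
    and ne: "\<And>n. K n \<noteq> {}" and dec: "\<And>n. K (Suc n) \<subseteq> K n"
    and mid: "\<And>n u w. u \<in> K n \<Longrightarrow> w \<in> K n \<Longrightarrow> scaleR (1/2) (u + w) \<in> K n"
    and bdd: "\<And>n. Inf (p ` K n) \<le> B"
  obtains w where "\<And>n. w n \<in> K n" "\<forall>e>0. \<exists>N. \<forall>m\<ge>N. \<forall>n\<ge>N. p (w m - w n) < e"
    "(\<lambda>n. p (w n)) \<longlonglongrightarrow> (SUP n. Inf (p ` K n))"
proof -
  define d where "d n = Inf (p ` K n)" for n
  define L where "L = (SUP n. d n)"
  have Kmono: "K m \<subseteq> K n" if "n \<le> m" for m n using lift_Suc_antimono_le[of K, OF dec that] .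
  have bb: "bdd_below (p ` K n)" for n using nonneg by (auto intro!: bdd_belowI[of _ 0])
  have d_le: "d n \<le> p u" if "u \<in> K n" for u n
    unfolding d_def by (rule cInf_lower[OF _ bb]) (use that in blast)
  have "incseq d"
    unfolding d_def using ne Kmono bb by (intro monoI cInf_superset_mono image_mono) auto
  moreover have "bdd_above (range d)" using bdd by (auto simp: d_def intro!: bdd_aboveI)
  ultimately have dL: "d \<longlonglongrightarrow> L" and d_leL: "d n \<le> L" for n
    unfolding L_def by (auto intro: LIMSEQ_incseq_SUP cSUP_upper)
  have "\<exists>u. u \<in> K n \<and> p u < d n + 1 / real (Suc n)" for n
    using cInf_lessD[of "p ` K n" "d n + 1 / real (Suc n)"] ne by (auto simp: d_def)
  then obtain w where wK: "\<And>n. w n \<in> K n" and w: "\<And>n. p (w n) < d n + 1 / real (Suc n)"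
    by metis
  \<comment> \<open>The midpoint of \<open>w m\<close> and \<open>w n\<close> lies in \<open>K N\<close>, so the parallelogram law squeezes \<open>p (w m - w n)\<close>.\<close>
  have est: "p (w m - w n) \<le> 4 * (L - d N) + 4 * (1 / real (Suc N))" if "N \<le> m" "N \<le> n" for m n N
  proof -
    have "w m \<in> K N" "w n \<in> K N" using wK Kmono that by blast+
    then have "d N \<le> p (scaleR (1/2) (w m + w n))" by (intro d_le mid)
    then have "4 * d N \<le> p (w m + w n)" by (simp add: half)
    moreover have "p (w m + w n) + p (w m - w n) = 2 * p (w m) + 2 * p (w n)"
      using par wK Kmono by blast
    moreover have "1 / real (Suc m) \<le> 1 / real (Suc N)" "1 / real (Suc n) \<le> 1 / real (Suc N)"
      using that by (simp_all add: frac_le)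
    ultimately show ?thesis using w[of m] w[of n] d_leL[of m] d_leL[of n] by argo
  qed
  have "(\<lambda>N. 4 * (L - d N) + 4 * (1 / real (Suc N))) \<longlonglongrightarrow> 4 * (L - L) + 4 * 0"
    by (intro tendsto_intros dL LIMSEQ_one_over_Suc)
  then have "\<forall>e>0. \<exists>N. 4 * (L - d N) + 4 * (1 / real (Suc N)) < e"
    by (auto dest!: order_tendstoD(2) simp: eventually_sequentially) (meson order_refl)
  then have "\<forall>e>0. \<exists>N. \<forall>m\<ge>N. \<forall>n\<ge>N. p (w m - w n) < e"
    using est by (meson le_less_trans)
  moreover have "(\<lambda>n. p (w n)) \<longlonglongrightarrow> L"
  proof (rule tendsto_sandwich[of d _ _ "\<lambda>n. d n + 1 / real (Suc n)"])
    show "(\<lambda>n. d n + 1 / real (Suc n)) \<longlonglongrightarrow> L" using tendsto_add[OF dL LIMSEQ_one_over_Suc] by simp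
  qed (use d_le[OF wK] w dL in \<open>auto intro: less_imp_le always_eventually\<close>)
  ultimately show ?thesis using that[OF wK] by (simp add: L_def d_def)
qed

inductive_set midpoint_hull :: "(nat \<Rightarrow> 'a::real_vector) \<Rightarrow> nat \<Rightarrow> 'a set"
  for z :: "nat \<Rightarrow> 'a" and n :: nat where
  base: "k \<ge> n \<Longrightarrow> z k \<in> midpoint_hull z n"
| mid: "u \<in> midpoint_hull z n \<Longrightarrow> w \<in> midpoint_hull z n \<Longrightarrow> scaleR (1/2) (u + w) \<in> midpoint_hull z n"

lemma midpoint_hull_mono: "n \<le> m \<Longrightarrow> midpoint_hull z m \<subseteq> midpoint_hull z n"
proof
  fix w assume "n \<le> m" and "w \<in> midpoint_hull z m"
  from this(2) show "w \<in> midpoint_hull z n"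
    by (induction rule: midpoint_hull.induct) (use \<open>n \<le> m\<close> in \<open>auto intro: midpoint_hull.intros\<close>)
qed

lemma midpoint_hull_subspace: "csubspace D \<Longrightarrow> (\<And>k. z k \<in> D) \<Longrightarrow> midpoint_hull z n \<subseteq> D"
proof
  fix w assume D: "csubspace D" and zD: "\<And>k. z k \<in> D" and "w \<in> midpoint_hull z n"
  from this(3) show "w \<in> D"
    by (induction rule: midpoint_hull.induct) (auto intro: zD csubspace_scaleR[OF D] csubspace_add[OF D])
qed

lemma midpoint_hull_close:
  fixes z :: "nat \<Rightarrow> 'a::real_normed_vector"
  assumes close: "\<And>k. k \<ge> n \<Longrightarrow> norm (z k - x) \<le> e"
  shows "w \<in> midpoint_hull z n \<Longrightarrow> norm (w - x) \<le> e"
proof (induction rule: midpoint_hull.induct)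
  case (base k) then show ?case using close by simp
next
  case (mid u w)
  have "scaleR (1/2) (u + w) - x = scaleR (1/2) ((u - x) + (w - x))"
    by (simp add: algebra_simps flip: scaleR_add_left)
  then have "norm (scaleR (1/2) (u + w) - x) = (1/2) * norm ((u - x) + (w - x))" by simp
  also have "\<dots> \<le> (1/2) * (norm (u - x) + norm (w - x))"
    by (intro mult_left_mono norm_triangle_ineq) auto
  also have "\<dots> \<le> e" using mid by simp
  finally show ?case .
qed

lemma midpoint_hull_tendsto:
  fixes z :: "nat \<Rightarrow> 'a::real_normed_vector"
  assumes lim: "z \<longlonglongrightarrow> x" and w: "\<And>n. w n \<in> midpoint_hull z n"
  shows "w \<longlonglongrightarrow> x"
proof (rule LIMSEQ_I)
  fix r :: real assume "r > 0"
  then obtain N where N: "\<And>k. k \<ge> N \<Longrightarrow> norm (z k - x) \<le> r/2"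
    using LIMSEQ_D[OF lim, of "r/2"] by (auto intro: less_imp_le)
  have close: "norm (w n - x) \<le> r/2" if "n \<ge> N" for n
  proof (rule midpoint_hull_close[where n=N, OF N])
    show "w n \<in> midpoint_hull z N" using midpoint_hull_mono[OF that] w by blast
  qed
  show "\<exists>N. \<forall>n\<ge>N. norm (w n - x) < r"
  proof (intro exI[of _ N] allI impI)
    fix n assume "n \<ge> N"
    with close[of n] \<open>r > 0\<close> show "norm (w n - x) < r" by linarith
  qed
qed

lemma closed_f_tendsto:
  fixes s :: "'h::chilbert form" and v :: 'h
  assumes C: "closed_f s" and v: "v \<noteq> 0" and wD: "\<And>n. w n \<in> dom_f s"
    and cauchy: "\<forall>e>0. \<exists>N. \<forall>m\<ge>N. \<forall>n\<ge>N. tnorm s (w m - w n) < e" and lim: "w \<longlonglongrightarrow> x"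
  shows "x \<in> dom_f s \<and> (\<lambda>n. quad_f s (w n)) \<longlonglongrightarrow> quad_f s x"
proof -
  have P: "positive_f s" using C by (simp add: closed_f_def)
  obtain y where yD: "y \<in> dom_f s" and ty: "(\<lambda>n. tnorm s (w n - y)) \<longlonglongrightarrow> 0"
    using C wD cauchy unfolding closed_f_def by blast
  have "(\<lambda>n. w n - y) \<longlonglongrightarrow> 0"
    by (rule Lim_null_comparison[OF _ ty]) (simp add: norm_le_tnorm[OF P v])
  then have "w \<longlonglongrightarrow> y" by (simp add: LIM_zero_iff)
  with lim have xy: "x = y" by (rule LIMSEQ_unique)
  have "(\<lambda>n. sqrt (quad_f s (w n)) - sqrt (quad_f s x)) \<longlonglongrightarrow> 0"
  proof (rule Lim_null_comparison[OF always_eventually ty[folded xy]], rule allI)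
    fix n
    have "norm (sqrt (quad_f s (w n)) - sqrt (quad_f s x)) \<le> sqrt (quad_f s (w n - x))"
      using quad_f_sqrt_diff[OF P wD yD[folded xy]] by simp
    also have "\<dots> \<le> sqrt ((tnorm s (w n - x))^2)"
      by (rule real_sqrt_le_mono[OF quad_f_le_tnorm[OF P v]])
    also have "\<dots> = tnorm s (w n - x)" using tnorm_nonneg[OF P v] by simp
    finally show "norm (sqrt (quad_f s (w n)) - sqrt (quad_f s x)) \<le> tnorm s (w n - x)" .
  qed
  then have "(\<lambda>n. (sqrt (quad_f s (w n)))^2) \<longlonglongrightarrow> (sqrt (quad_f s x))^2"
    by (intro tendsto_power) (simp add: LIM_zero_iff)
  then show ?thesis using xy yD quad_f_nonneg[OF P] by simp
qed

lemma closed_f_limit_le: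
  fixes s :: "'h::chilbert form" and v :: 'h
  assumes C: "closed_f s" and v: "v \<noteq> 0" and zD: "\<And>n. z n \<in> dom_f s" and lim: "z \<longlonglongrightarrow> x"
    and M: "\<And>n. quad_f s (z n) \<le> M"
  shows "x \<in> dom_f s \<and> quad_f s x \<le> M"
proof -
  have P: "positive_f s" using C by (simp add: closed_f_def)
  have hull_dom: "midpoint_hull z n \<subseteq> dom_f s" for n
    by (rule midpoint_hull_subspace[OF is_formD(1)[OF pos_form[OF P]] zD])
  define p where "p u = quad_f s u + (norm u)^2" for u
  obtain B where B: "\<And>n. norm (z n) \<le> B"
    using convergent_imp_Bseq[of z] lim by (auto simp: Bseq_def convergent_def)
  have p_le: "p u \<le> M + B^2" if "u \<in> range z" for u
    using that M B norm_ge_zero unfolding p_def by (auto intro!: add_mono power_mono)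
  have Inf_le: "Inf (p ` midpoint_hull z n) \<le> p (z k)" if "n \<le> k" for n k
    using quad_f_nonneg[OF P] that
    by (intro cInf_lower) (auto simp: p_def intro: midpoint_hull.base intro!: bdd_belowI[of _ 0])
  obtain w where wK: "\<And>n. w n \<in> midpoint_hull z n"
    and p_cauchy: "\<forall>e>0. \<exists>N. \<forall>m\<ge>N. \<forall>n\<ge>N. p (w m - w n) < e"
    and pw: "(\<lambda>n. p (w n)) \<longlonglongrightarrow> (SUP n. Inf (p ` midpoint_hull z n))"
  proof (rule parallelogram_minimizing_seq[of "midpoint_hull z" p "M + B^2"])
    show "p (u + w) + p (u - w) = 2 * p u + 2 * p w"
      if "u \<in> midpoint_hull z 0" "w \<in> midpoint_hull z 0" for u w
    proof -
      have "u \<in> dom_f s" "w \<in> dom_f s" using that hull_dom by blast+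
      then show ?thesis
        using quad_f_parallelogram[OF P] norm_parallelogram[of u w] unfolding p_def by fastforce
    qed
    show "Inf (p ` midpoint_hull z n) \<le> M + B^2" for n
      using Inf_le[of n n] p_le[of "z n"] by simp
    show "p (scaleR (1/2) u) = p u / 4" and "0 \<le> p u" and "p (- u) = p u" for u
      using quad_f_nonneg[OF P, of u]
      by (simp_all add: p_def quad_f_scaleR[OF P] quad_f_minus[OF P] power2_eq_square field_simps)
    show "midpoint_hull z n \<noteq> {}" for n using midpoint_hull.base[of n n z] by blast
    show "midpoint_hull z (Suc n) \<subseteq> midpoint_hull z n" for n by (rule midpoint_hull_mono) simp
  qed (blast intro: midpoint_hull.mid)+
  define L where "L = (SUP n. Inf (p ` midpoint_hull z n))"
  have wD: "w n \<in> dom_f s" for n using wK hull_dom by blast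
  have wx: "w \<longlonglongrightarrow> x" by (rule midpoint_hull_tendsto[OF lim wK])
  have "\<forall>e>0. \<exists>N. \<forall>m\<ge>N. \<forall>n\<ge>N. tnorm s (w m - w n) < e"
    by (rule tnorm_Cauchy[OF P v p_cauchy[unfolded p_def]])
  then have xD: "x \<in> dom_f s" and qw: "(\<lambda>n. quad_f s (w n)) \<longlonglongrightarrow> quad_f s x"
    using closed_f_tendsto[OF C v wD _ wx] by auto
  have "(\<lambda>n. p (w n)) \<longlonglongrightarrow> quad_f s x + (norm x)^2"
    unfolding p_def by (intro tendsto_intros qw wx)
  then have qx: "quad_f s x + (norm x)^2 = L"
    using pw LIMSEQ_unique unfolding L_def by blast
  have "Inf (p ` midpoint_hull z n) \<le> M + (norm x)^2" for n
  proof (rule LIMSEQ_le_const)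
    show "(\<lambda>k. M + (norm (z k))^2) \<longlonglongrightarrow> M + (norm x)^2" by (intro tendsto_intros lim)
    show "\<exists>N. \<forall>k\<ge>N. Inf (p ` midpoint_hull z n) \<le> M + (norm (z k))^2"
      using Inf_le M unfolding p_def by (meson add_right_mono order_trans)
  qed
  then have "L \<le> M + (norm x)^2" unfolding L_def by (rule cSUP_least[OF UNIV_not_empty])
  with qx xD show ?thesis by simp
qed

section \<open>Closability and the regular part\<close>

definition lsc_f :: "'h::chilbert form \<Rightarrow> bool" where
  "lsc_f t \<longleftrightarrow> (\<forall>x\<in>dom_f t. \<forall>d>0. \<exists>e>0. \<forall>z\<in>dom_f t. dist z x < e \<longrightarrow> quad_f t x - d \<le> quad_f t z)"

lemma lsc_f_add: "lsc_f x \<Longrightarrow> lsc_f y \<Longrightarrow> lsc_f (add_f x y)"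
  unfolding lsc_f_def add_f_simps(1)
proof (intro ballI allI impI)
  fix z d assume Lx: "\<forall>x'\<in>dom_f x. \<forall>d>0. \<exists>e>0. \<forall>z\<in>dom_f x. dist z x' < e \<longrightarrow> quad_f x x' - d \<le> quad_f x z"
    and Ly: "\<forall>x'\<in>dom_f y. \<forall>d>0. \<exists>e>0. \<forall>z\<in>dom_f y. dist z x' < e \<longrightarrow> quad_f y x' - d \<le> quad_f y z"
    and z: "z \<in> dom_f x \<inter> dom_f y" and d: "(d::real) > 0"
  obtain e1 where e1: "e1 > 0" "\<And>w. w \<in> dom_f x \<Longrightarrow> dist w z < e1 \<Longrightarrow> quad_f x z - d/2 \<le> quad_f x w"
    using Lx z d by (meson IntD1 half_gt_zero)
  obtain e2 where e2: "e2 > 0" "\<And>w. w \<in> dom_f y \<Longrightarrow> dist w z < e2 \<Longrightarrow> quad_f y z - d/2 \<le> quad_f y w"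
    using Ly z d by (meson IntD2 half_gt_zero)
  show "\<exists>e>0. \<forall>w\<in>dom_f x \<inter> dom_f y. dist w z < e \<longrightarrow> quad_f (add_f x y) z - d \<le> quad_f (add_f x y) w"
  proof (intro exI[of _ "min e1 e2"] conjI ballI impI)
    show "min e1 e2 > 0" using e1 e2 by simp
    fix w assume w: "w \<in> dom_f x \<inter> dom_f y" and dw: "dist w z < min e1 e2"
    have "quad_f x z - d/2 \<le> quad_f x w" "quad_f y z - d/2 \<le> quad_f y w" using e1 e2 w dw by auto
    then show "quad_f (add_f x y) z - d \<le> quad_f (add_f x y) w" using z w by (simp add: quad_f_add_f)
  qed
qed

lemma closable_imp_lsc_f:
  fixes t :: "'h::chilbert form" and v :: 'h
  assumes P: "positive_f t" and Cl: "closable_f t" and v: "v \<noteq> 0"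
  shows "lsc_f t"
  unfolding lsc_f_def
proof (intro ballI allI impI)
  fix x d assume x: "x \<in> dom_f t" and d: "(d::real) > 0"
  obtain s where C: "closed_f s" and E: "extends_f s t" using Cl by (auto simp: closable_f_def)
  have sub: "dom_f t \<subseteq> dom_f s" using E by (simp add: extends_f_def)
  have qe: "z \<in> dom_f t \<Longrightarrow> quad_f s z = quad_f t z" for z using E by (simp add: extends_f_def quad_f_def)
  show "\<exists>e>0. \<forall>z\<in>dom_f t. dist z x < e \<longrightarrow> quad_f t x - d \<le> quad_f t z"
  proof (rule ccontr)
    assume "\<not> ?thesis"
    then have h: "\<forall>e>0. \<exists>z\<in>dom_f t. dist z x < e \<and> quad_f t z < quad_f t x - d"
      by (auto simp: not_le)
    have "\<forall>n. \<exists>z. z \<in> dom_f t \<and> dist z x < 1 / real (Suc n) \<and> quad_f t z < quad_f t x - d"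
    proof
      fix n :: nat
      have "1 / real (Suc n) > 0" by simp
      then show "\<exists>z. z \<in> dom_f t \<and> dist z x < 1 / real (Suc n) \<and> quad_f t z < quad_f t x - d"
        using h by blast
    qed
    then obtain z where z: "\<And>n. z n \<in> dom_f t" "\<And>n. dist (z n) x < 1 / real (Suc n)"
      "\<And>n. quad_f t (z n) < quad_f t x - d" by metis
    have "(\<lambda>n. z n - x) \<longlonglongrightarrow> 0"
      by (rule Lim_null_comparison[OF _ LIMSEQ_one_over_Suc])
         (use z(2) in \<open>auto simp: dist_norm less_imp_le\<close>)
    then have lim: "z \<longlonglongrightarrow> x" using tendsto_add[of "\<lambda>n. z n - x" 0 sequentially "\<lambda>n. x" x] by simp
    have "x \<in> dom_f s \<and> quad_f s x \<le> quad_f t x - d"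
    proof (rule closed_f_limit_le[OF C v _ lim])
      show "z n \<in> dom_f s" for n using z(1) sub by auto
      show "quad_f s (z n) \<le> quad_f t x - d" for n using z(1,3) qe by (simp add: less_imp_le)
    qed
    then show False using qe[OF x] d by simp
  qed
qed

context
  fixes t :: "'h::chilbert form" and v :: 'h
  assumes P: "positive_f t" and v: "v \<noteq> 0"
begin

lemma lsc_minorant_le_lsc_env:
  assumes L: "lsc_f r" and dr: "dom_f r = dom_f t"
    and le: "\<And>z. z \<in> dom_f t \<Longrightarrow> quad_f r z \<le> quad_f t z" and x: "x \<in> dom_f t"
  shows "quad_f r x \<le> lsc_env t x"
proof (rule field_le_epsilon)
  fix d :: real assume d: "d > 0"
  obtain e where e: "e > 0" "\<And>z. z \<in> dom_f t \<Longrightarrow> dist z x < e \<Longrightarrow> quad_f r x - d \<le> quad_f r z"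
    using L x d dr unfolding lsc_f_def by force
  have "quad_f r x - d \<le> lsc_env t x"
    by (rule le_lsc_env_if_local_bound[OF P _ e(1)])
      (use lsc_env_le_quad_f[OF P x] e(2) le order_trans in blast)+
  then show "quad_f r x \<le> lsc_env t x + d" by simp
qed

lemma env_part_eq_if_lsc_f:
  assumes L: "lsc_f t"
  shows "env_part t = t"
proof (rule pos_form_eq[OF env_part_props(1)[OF P v] P env_part_props(3)[OF P v]])
  fix x assume "x \<in> dom_f (env_part t)"
  then have x: "x \<in> dom_f t" using env_part_props(3)[OF P v] by simp
  show "quad_f (env_part t) x = quad_f t x"
    using env_part_props(4)[OF P v x] lsc_minorant_le_lsc_env[OF L refl order_refl x] lsc_env_le_quad_f[OF P x] by simp
qed

lemma lsc_f_imp_closable: "lsc_f t \<Longrightarrow> closable_f t"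
  using env_part_eq_if_lsc_f env_part_props(2)[OF P v] by metis

lemma closable_iff_lsc_f: "closable_f t \<longleftrightarrow> lsc_f t"
  using lsc_f_imp_closable closable_imp_lsc_f[OF P _ v] by blast

lemma regular_part_cand_le_lsc_env:
  assumes R: "regular_part_cand t r" and x: "x \<in> dom_f t"
  shows "quad_f r x \<le> lsc_env t x"
  using R closable_imp_lsc_f[OF _ _ v] lsc_minorant_le_lsc_env[OF _ _ _ x]
  by (auto simp: regular_part_cand_def quad_f_def)

lemma regular_part_cand_env_part: "regular_part_cand t (env_part t)"
  unfolding regular_part_cand_def
  using env_part_props[OF P v] lsc_env_le_quad_f[OF P] by (auto simp: quad_f_def[symmetric])

lemma regular_part_eq: "regular_part t = env_part t"
  unfolding regular_part_def
proof (rule the_equality)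
  show "regular_part_cand t (env_part t) \<and>
    (\<forall>r'. regular_part_cand t r' \<longrightarrow> (\<forall>x\<in>dom_f t. Re (val_f r' x x) \<le> Re (val_f (env_part t) x x)))"
    using regular_part_cand_env_part regular_part_cand_le_lsc_env env_part_props(4)[OF P v] by (auto simp: quad_f_def[symmetric])
next
  fix r assume h: "regular_part_cand t r \<and>
    (\<forall>r'. regular_part_cand t r' \<longrightarrow> (\<forall>x\<in>dom_f t. Re (val_f r' x x) \<le> Re (val_f r x x)))"
  then have Rr: "regular_part_cand t r" by blast
  have "\<forall>x\<in>dom_f t. Re (val_f (env_part t) x x) \<le> Re (val_f r x x)" using h regular_part_cand_env_part by blast
  then have mx: "\<And>x. x \<in> dom_f t \<Longrightarrow> quad_f (env_part t) x \<le> quad_f r x" by (simp add: quad_f_def)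
  have Pr: "positive_f r" and dr: "dom_f r = dom_f t" using Rr by (auto simp: regular_part_cand_def)
  show "r = env_part t"
  proof (rule pos_form_eq[OF Pr env_part_props(1)[OF P v]])
    show "dom_f r = dom_f (env_part t)" using dr env_part_props(3)[OF P v] by simp
    fix x assume "x \<in> dom_f r"
    then have x: "x \<in> dom_f t" using dr by simp
    show "quad_f r x = quad_f (env_part t) x"
      using regular_part_cand_le_lsc_env[OF Rr x] mx[OF x] env_part_props(4)[OF P v x] by simp
  qed
qed

lemma regular_iff_closable: "regular_f t \<longleftrightarrow> closable_f t"
proof
  assume reg: "regular_f t"
  have "t = env_part t"
  proof (rule form_ext[OF pos_form[OF P] pos_form[OF env_part_props(1)[OF P v]]])
    show "dom_f t = dom_f (env_part t)" using env_part_props(3)[OF P v] by simp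
    fix x y assume x: "x \<in> dom_f t" and y: "y \<in> dom_f t"
    have "val_f (singular_part t) x y = 0" using reg x y by (simp add: regular_f_def)
    then show "val_f t x y = val_f (env_part t) x y"
      using x y env_part_props(3)[OF P v]
      by (simp add: singular_part_def regular_part_eq diff_f_def dom_f_def[symmetric] val_f_def[symmetric])
  qed
  then show "closable_f t" using env_part_props(2)[OF P v] by metis
next
  assume "closable_f t"
  then have "env_part t = t" using env_part_eq_if_lsc_f closable_imp_lsc_f[OF P _ v] by blast
  then show "regular_f t"
    by (simp add: regular_f_def singular_part_def regular_part_eq diff_f_def)
qed

end

lemma Vf_pos: "t \<in> Vf \<Longrightarrow> positive_f t"
  and Vf_bounded_dom: "t \<in> Vf \<Longrightarrow> bounded_f t \<Longrightarrow> dom_f t = UNIV"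
  by (simp_all add: Vf_def)

lemma bounded_fI: "(\<And>x. x \<in> dom_f t \<Longrightarrow> norm x = 1 \<Longrightarrow> quad_f t x \<le> B) \<Longrightarrow> bounded_f t"
  unfolding bounded_f_def quad_f_def by (auto intro!: bdd_aboveI[of _ B])

lemma bounded_fD: "bounded_f t \<Longrightarrow> \<exists>B. \<forall>x. x \<in> dom_f t \<longrightarrow> norm x = 1 \<longrightarrow> quad_f t x \<le> B"
  unfolding bounded_f_def quad_f_def bdd_above_def by blast

definition compatible_f :: "'h::chilbert form \<Rightarrow> 'h form \<Rightarrow> bool" where
  "compatible_f t s \<longleftrightarrow> bounded_f t \<or> bounded_f s \<or> dom_f t = dom_f s"

lemma oplus_Vf_eq: "oplus_Vf t s = (if compatible_f t s then Some (add_f t s) else None)"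
  by (simp add: oplus_Vf_def compatible_f_def)

lemma compatible_f_commute: "compatible_f t s \<longleftrightarrow> compatible_f s t"
  by (auto simp: compatible_f_def)

lemma oplus_Vf_commute: "oplus_Vf t s = oplus_Vf s t"
  by (simp add: oplus_Vf_eq compatible_f_commute add_f_commute)

context
  fixes x y :: "'h::chilbert form"
  assumes x: "x \<in> Vf" and y: "y \<in> Vf" and compat: "compatible_f x y"
begin

lemma compatible_dom_Int: "dom_f x \<inter> dom_f y = dom_f x \<or> dom_f x \<inter> dom_f y = dom_f y"
  using compat Vf_bounded_dom[OF x] Vf_bounded_dom[OF y] by (auto simp: compatible_f_def)

lemma compatible_dom_Int_dense: "closure (dom_f x \<inter> dom_f y) = UNIV"
  using compatible_dom_Int dense_dom[OF Vf_pos[OF x]] dense_dom[OF Vf_pos[OF y]] by auto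

lemma positive_add_compatible: "positive_f (add_f x y)"
  by (rule positive_add_f[OF Vf_pos[OF x] Vf_pos[OF y] compatible_dom_Int_dense])

lemma bounded_add_compatible_iff: "bounded_f (add_f x y) \<longleftrightarrow> bounded_f x \<and> bounded_f y"
proof
  assume "bounded_f (add_f x y)"
  then obtain B where "\<forall>z. z \<in> dom_f (add_f x y) \<longrightarrow> norm z = 1 \<longrightarrow> quad_f (add_f x y) z \<le> B"
    using bounded_fD by blast
  then have B: "\<And>z. z \<in> dom_f x \<inter> dom_f y \<Longrightarrow> norm z = 1 \<Longrightarrow> quad_f x z + quad_f y z \<le> B"
    by (simp add: add_f_simps quad_f_add_f)
  have bx: "bounded_f x" if "dom_f x \<inter> dom_f y = dom_f x"
  proof (rule bounded_fI[of _ B])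
    fix z assume "z \<in> dom_f x" "norm z = 1"
    then show "quad_f x z \<le> B" using B[of z] quad_f_nonneg[OF Vf_pos[OF y], of z] that by auto
  qed
  have bdd_y: "bounded_f y" if "dom_f x \<inter> dom_f y = dom_f y"
  proof (rule bounded_fI[of _ B])
    fix z assume "z \<in> dom_f y" "norm z = 1"
    then show "quad_f y z \<le> B" using B[of z] quad_f_nonneg[OF Vf_pos[OF x], of z] that by auto
  qed
  from compatible_dom_Int show "bounded_f x \<and> bounded_f y"
  proof
    assume "dom_f x \<inter> dom_f y = dom_f x"
    with bx have "bounded_f x" by blast
    with Vf_bounded_dom[OF x] have "dom_f x \<inter> dom_f y = dom_f y" by simp
    with bdd_y \<open>bounded_f x\<close> show ?thesis by blast
  next
    assume "dom_f x \<inter> dom_f y = dom_f y"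
    with bdd_y have "bounded_f y" by blast
    with Vf_bounded_dom[OF y] have "dom_f x \<inter> dom_f y = dom_f x" by simp
    with bx \<open>bounded_f y\<close> show ?thesis by blast
  qed
next
  assume "bounded_f x \<and> bounded_f y"
  then obtain B1 B2 where B1: "\<And>z. z \<in> dom_f x \<Longrightarrow> norm z = 1 \<Longrightarrow> quad_f x z \<le> B1"
    and B2: "\<And>z. z \<in> dom_f y \<Longrightarrow> norm z = 1 \<Longrightarrow> quad_f y z \<le> B2"
    using bounded_fD by meson
  show "bounded_f (add_f x y)"
    by (rule bounded_fI[of _ "B1 + B2"]) (auto simp: add_f_simps quad_f_add_f intro: add_mono B1 B2)
qed

lemma add_compatible_in_Vf: "add_f x y \<in> Vf"
  unfolding Vf_def using positive_add_compatible bounded_add_compatible_iff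
    Vf_bounded_dom[OF x] Vf_bounded_dom[OF y]
  by (auto simp: add_f_simps)

end

lemma oplus_Vf_in_Vf: "x \<in> Vf \<Longrightarrow> y \<in> Vf \<Longrightarrow> oplus_Vf x y = Some w \<Longrightarrow> w \<in> Vf"
  by (auto simp: oplus_Vf_eq add_compatible_in_Vf split: if_splits)

lemma compatible_f_assoc:
  assumes x: "x \<in> Vf" and y: "y \<in> Vf" and w: "w \<in> Vf"
  shows "(compatible_f x y \<and> compatible_f (add_f x y) w) \<longleftrightarrow>
         (compatible_f y w \<and> compatible_f x (add_f y w))"
proof -
  have "compatible_f (add_f x y) w \<longleftrightarrow>
      (bounded_f x \<and> bounded_f y) \<or> bounded_f w \<or> dom_f x \<inter> dom_f y = dom_f w"
    if "compatible_f x y"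
    using bounded_add_compatible_iff[OF x y that] by (simp add: compatible_f_def add_f_simps)
  moreover have "compatible_f x (add_f y w) \<longleftrightarrow>
      bounded_f x \<or> (bounded_f y \<and> bounded_f w) \<or> dom_f x = dom_f y \<inter> dom_f w"
    if "compatible_f y w"
    using bounded_add_compatible_iff[OF y w that] by (simp add: compatible_f_def add_f_simps)
  ultimately show ?thesis
    using Vf_bounded_dom[OF x] Vf_bounded_dom[OF y] Vf_bounded_dom[OF w]
    by (cases "bounded_f x"; cases "bounded_f y"; cases "bounded_f w") (auto simp: compatible_f_def)
qed

lemma add_f_zero_right:
  assumes "is_form x"
  shows "add_f x zero_f = x"
proof -
  have "(\<lambda>a b. if a \<in> dom_f x \<inter> dom_f zero_f \<and> b \<in> dom_f x \<inter> dom_f zero_f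
           then val_f x a b + val_f zero_f a b else 0) = val_f x"
    by (intro ext) (auto simp: fval_out[OF assms])
  then show ?thesis unfolding add_f_def using form_pair[of x] by simp
qed

context
  fixes s :: "'h::chilbert form"
  assumes P: "positive_f s" and B: "bounded_f s" and U: "dom_f s = UNIV"
begin

lemma bounded_quad_f_le: "\<exists>C\<ge>0. \<forall>z. quad_f s z \<le> C * (norm z)^2"
proof -
  obtain B0 where B0: "\<And>x. x \<in> dom_f s \<Longrightarrow> norm x = 1 \<Longrightarrow> quad_f s x \<le> B0" using bounded_fD[OF B] by blast
  define C where "C = max B0 0"
  have "quad_f s z \<le> C * (norm z)^2" for z
  proof (cases "z = 0")
    case True then show ?thesis using quad_f_zero[OF P] by simp
  next
    case False
    define u where "u = hscale (complex_of_real (1 / norm z)) z"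
    have nu: "norm u = 1" using False by (simp add: u_def norm_hscale norm_divide)
    have "quad_f s u = quad_f s z / (norm z)^2" using False
      by (simp add: u_def quad_f_hscale[OF P] norm_divide power_divide)
    moreover have "quad_f s u \<le> C" using B0[of u] U nu by (simp add: C_def)
    ultimately show ?thesis using False by (simp add: divide_le_eq mult.commute)
  qed
  moreover have "C \<ge> 0" by (simp add: C_def)
  ultimately show ?thesis by blast
qed

lemma bounded_val_le: "\<exists>C\<ge>0. \<forall>a b. cmod (val_f s a b) \<le> C * norm a * norm b"
proof -
  obtain C where C: "C \<ge> 0" "\<And>z. quad_f s z \<le> C * (norm z)^2" using bounded_quad_f_le by blast
  have "cmod (val_f s a b) \<le> C * norm a * norm b" for a b
  proof -
    have "(cmod (val_f s a b))^2 \<le> quad_f s a * quad_f s b" using pos_CS[OF P] U by simp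
    also have "\<dots> \<le> (C * (norm a)^2) * (C * (norm b)^2)"
      using C quad_f_nonneg[OF P] by (intro mult_mono) auto
    also have "\<dots> = (C * norm a * norm b)^2" by (simp add: power2_eq_square)
    finally show ?thesis by (rule power2_le_imp_le) (use C in simp)
  qed
  then show ?thesis using C by blast
qed

lemma bounded_val_tendsto:
  assumes a: "A \<longlonglongrightarrow> a" and b: "Bs \<longlonglongrightarrow> b"
  shows "(\<lambda>n. val_f s (A n) (Bs n)) \<longlonglongrightarrow> val_f s a b"
proof -
  have F: "is_form s" by (rule pos_form[OF P])
  obtain C where C: "C \<ge> 0" "\<And>a b. cmod (val_f s a b) \<le> C * norm a * norm b" using bounded_val_le by blast
  have eq: "val_f s (A n) (Bs n) - val_f s a b = val_f s (A n - a) b + val_f s (A n) (Bs n - b)" for n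
    using U by (simp add: fval_diff_left[OF F] fval_diff_right[OF F])
  have g: "(\<lambda>n. C * norm (A n - a) * norm b + C * norm (A n) * norm (Bs n - b)) \<longlonglongrightarrow>
      C * 0 * norm b + C * norm a * 0"
    by (intro tendsto_intros a b tendsto_norm_zero LIM_zero)
  have "(\<lambda>n. val_f s (A n) (Bs n) - val_f s a b) \<longlonglongrightarrow> 0"
  proof (rule Lim_null_comparison[OF _ g[simplified]])
    show "eventually (\<lambda>n. norm (val_f s (A n) (Bs n) - val_f s a b)
      \<le> C * norm (A n - a) * norm b + C * norm (A n) * norm (Bs n - b)) sequentially"
    proof (rule always_eventually, rule allI)
      fix n
      have "norm (val_f s (A n) (Bs n) - val_f s a b) \<le> cmod (val_f s (A n - a) b) + cmod (val_f s (A n) (Bs n - b))"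
        unfolding eq by (rule norm_triangle_ineq)
      also have "\<dots> \<le> C * norm (A n - a) * norm b + C * norm (A n) * norm (Bs n - b)"
        by (intro add_mono C(2))
      finally show "norm (val_f s (A n) (Bs n) - val_f s a b)
        \<le> C * norm (A n - a) * norm b + C * norm (A n) * norm (Bs n - b)" .
    qed
  qed
  then show ?thesis by (rule LIM_zero_cancel)
qed

end

lemma bounded_eq_on_dense:
  assumes Py: "positive_f y" "bounded_f y" "dom_f y = UNIV"
    and Py': "positive_f y'" "bounded_f y'" "dom_f y' = UNIV"
    and D: "closure D = UNIV" and eq: "\<And>a b. a \<in> D \<Longrightarrow> b \<in> D \<Longrightarrow> val_f y a b = val_f y' a b"
  shows "y = y'"
proof (rule form_ext[OF pos_form[OF Py(1)] pos_form[OF Py'(1)]])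
  show "dom_f y = dom_f y'" using Py Py' by simp
  fix a b
  have "a \<in> closure D" "b \<in> closure D" using D by auto
  then obtain A Bs where A: "\<And>n. A n \<in> D" "A \<longlonglongrightarrow> a" and Bs: "\<And>n. Bs n \<in> D" "Bs \<longlonglongrightarrow> b"
    unfolding closure_sequential by metis
  have l1: "(\<lambda>n. val_f y (A n) (Bs n)) \<longlonglongrightarrow> val_f y a b" by (rule bounded_val_tendsto[OF Py A(2) Bs(2)])
  have l2: "(\<lambda>n. val_f y (A n) (Bs n)) \<longlonglongrightarrow> val_f y' a b"
    using bounded_val_tendsto[OF Py' A(2) Bs(2)] eq[OF A(1) Bs(1)] by simp
  show "val_f y a b = val_f y' a b" using LIMSEQ_unique[OF l1 l2] .
qed

lemma add_f_eqD:
  assumes "add_f x y = add_f x y'"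
  shows "dom_f x \<inter> dom_f y = dom_f x \<inter> dom_f y'"
    "\<And>a b. a \<in> dom_f x \<inter> dom_f y \<Longrightarrow> b \<in> dom_f x \<inter> dom_f y \<Longrightarrow> val_f y a b = val_f y' a b"
proof -
  show d: "dom_f x \<inter> dom_f y = dom_f x \<inter> dom_f y'"
    using arg_cong[OF assms, of dom_f] by (simp add: add_f_simps)
  fix a b assume a: "a \<in> dom_f x \<inter> dom_f y" and b: "b \<in> dom_f x \<inter> dom_f y"
  have "val_f (add_f x y) a b = val_f (add_f x y') a b" using assms by simp
  then show "val_f y a b = val_f y' a b" using a b d by (simp add: add_f_simps)
qed

lemma bounded_f_if_agrees:
  assumes "bounded_f s" "dom_f t \<subseteq> dom_f s" "\<And>z. z \<in> dom_f t \<Longrightarrow> quad_f t z = quad_f s z"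
  shows "bounded_f t"
proof -
  obtain B where "\<forall>z. z \<in> dom_f s \<longrightarrow> norm z = 1 \<longrightarrow> quad_f s z \<le> B"
    using bounded_fD[OF assms(1)] by blast
  then show ?thesis by (intro bounded_fI[of _ B]) (use assms(2,3) in auto)
qed

lemma Vf_eq_if_agree_on_dense:
  assumes y: "y \<in> Vf" and y': "y' \<in> Vf" and D: "closure D = UNIV"
    and dy: "bounded_f y \<or> dom_f y = D" and dy': "bounded_f y' \<or> dom_f y' = D"
    and sub: "D \<subseteq> dom_f y" "D \<subseteq> dom_f y'"
    and agree: "\<And>a b. a \<in> D \<Longrightarrow> b \<in> D \<Longrightarrow> val_f y a b = val_f y' a b"
  shows "y = y'"
proof -
  have q: "quad_f y z = quad_f y' z" if "z \<in> D" for z using agree[OF that that] by (simp add: quad_f_def)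
  have "bounded_f y" if "bounded_f y'" "dom_f y = D"
    by (rule bounded_f_if_agrees[OF that(1)]) (use that sub q in auto)
  moreover have "bounded_f y'" if "bounded_f y" "dom_f y' = D"
    by (rule bounded_f_if_agrees[OF that(1)]) (use that sub q in auto)
  ultimately consider "bounded_f y" "bounded_f y'" | "dom_f y = D" "dom_f y' = D"
    using dy dy' by blast
  then show ?thesis
  proof cases
    case 1
    then show ?thesis
      using bounded_eq_on_dense[OF Vf_pos[OF y] _ _ Vf_pos[OF y'] _ _ D agree]
        Vf_bounded_dom[OF y] Vf_bounded_dom[OF y'] by simp
  next
    case 2
    then show ?thesis
      using agree by (intro form_ext[OF pos_form[OF Vf_pos[OF y]] pos_form[OF Vf_pos[OF y']]]) auto
  qed
qed

lemma cancel_Vf: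
  assumes x: "x \<in> Vf" and y: "y \<in> Vf" and y': "y' \<in> Vf"
    and c: "compatible_f x y" and c': "compatible_f x y'" and eq: "add_f x y = add_f x y'"
  shows "y = y'"
proof (cases "bounded_f x")
  case True
  then have "dom_f x = UNIV" by (rule Vf_bounded_dom[OF x])
  then show ?thesis
    using add_f_eqD[OF eq]
    by (intro form_ext[OF pos_form[OF Vf_pos[OF y]] pos_form[OF Vf_pos[OF y']]]) auto
next
  case False
  then have d: "bounded_f y \<or> dom_f y = dom_f x" "bounded_f y' \<or> dom_f y' = dom_f x"
    using c c' by (auto simp: compatible_f_def)
  then have "dom_f x \<subseteq> dom_f y" "dom_f x \<subseteq> dom_f y'"
    using Vf_bounded_dom[OF y] Vf_bounded_dom[OF y'] by auto
  with d show ?thesis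
    using add_f_eqD[OF eq]
    by (intro Vf_eq_if_agree_on_dense[OF y y' dense_dom[OF Vf_pos[OF x]]]) (auto simp: Int_absorb2)
qed

lemma oplus_Vf_zeroD:
  assumes x: "x \<in> Vf" and y: "y \<in> Vf" and "oplus_Vf x y = Some zero_f"
  shows "x = zero_f"
proof -
  have e: "add_f x y = zero_f" using assms(3) by (auto simp: oplus_Vf_eq split: if_splits)
  have "dom_f x \<inter> dom_f y = UNIV" using arg_cong[OF e, of dom_f] by (simp only: add_f_simps zero_f_simps)
  then have dom: "dom_f x = UNIV" "dom_f y = UNIV" by blast+
  have "quad_f x z + quad_f y z = 0" for z
    using arg_cong[OF e, of "\<lambda>t. quad_f t z"] dom by (simp add: quad_f_add_f)
  then have "quad_f x z = 0" for z
    using quad_f_nonneg[OF Vf_pos[OF x], of z] quad_f_nonneg[OF Vf_pos[OF y], of z] by (metis add_nonneg_eq_0_iff)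
  then show ?thesis using pos_form_eq[OF Vf_pos[OF x] positive_zero_f] dom by simp
qed

lemma Option_bind_oplus_Vf:
  "Option.bind (oplus_Vf x y) (\<lambda>u. oplus_Vf u w) =
     (if compatible_f x y \<and> compatible_f (add_f x y) w then Some (add_f (add_f x y) w) else None)"
  "Option.bind (oplus_Vf y w) (\<lambda>u. oplus_Vf x u) =
     (if compatible_f y w \<and> compatible_f x (add_f y w) then Some (add_f x (add_f y w)) else None)"
  by (simp_all add: oplus_Vf_eq)

theorem gen_effect_algebra_Vf: "gen_effect_algebra (Vf :: 'h::chilbert form set) oplus_Vf zero_f"
  unfolding gen_effect_algebra_def
proof (intro conjI ballI allI impI)
  show "zero_f \<in> Vf" by (rule zero_in_Vf)
  show "w \<in> Vf" if "x \<in> Vf" "y \<in> Vf" "oplus_Vf x y = Some w" for x y w :: "'h form"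
    using oplus_Vf_in_Vf that .
  show "oplus_Vf x y = oplus_Vf y x" for x y :: "'h form" by (rule oplus_Vf_commute)
  show "Option.bind (oplus_Vf x y) (\<lambda>u. oplus_Vf u w) = Option.bind (oplus_Vf y w) (oplus_Vf x)"
    if "x \<in> Vf" "y \<in> Vf" "w \<in> Vf" for x y w :: "'h form"
    using compatible_f_assoc[OF that] by (simp add: Option_bind_oplus_Vf add_f_assoc)
  show "oplus_Vf x zero_f = Some x" if "x \<in> Vf" for x :: "'h form"
    using that by (simp add: oplus_Vf_eq compatible_f_def bounded_zero_f add_f_zero_right pos_form Vf_pos)
  show "y = y'" if "x \<in> Vf" "y \<in> Vf" "y' \<in> Vf" "oplus_Vf x y = Some w \<and> oplus_Vf x y' = Some w"
    for x y y' w :: "'h form"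
  proof (rule cancel_Vf[OF that(1-3)])
    show "compatible_f x y" "compatible_f x y'" "add_f x y = add_f x y'"
      using that(4) by (simp_all add: oplus_Vf_eq split: if_splits)
  qed
  show "x = zero_f" "y = zero_f" if "x \<in> Vf" "y \<in> Vf" "oplus_Vf x y = Some zero_f" for x y :: "'h form"
    using oplus_Vf_zeroD[OF that] oplus_Vf_zeroD[OF that(2,1)] that(3) oplus_Vf_commute by metis+
qed

lemma gen_effect_algebra_restrict:
  assumes E: "gen_effect_algebra E op z" and Q: "Q \<subseteq> E" "z \<in> Q"
    and closed: "\<And>x y w. x \<in> Q \<Longrightarrow> y \<in> Q \<Longrightarrow> op x y = Some w \<Longrightarrow> w \<in> Q"
  shows "gen_effect_algebra Q (restrict_op Q op) z"
proof -
  have eq: "restrict_op Q op x y = op x y" if "x \<in> Q" "y \<in> Q" for x y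
    using closed[OF that] by (cases "op x y") (auto simp: restrict_op_def)
  have bind: "Option.bind (restrict_op Q op x y) (\<lambda>u. restrict_op Q op u w)
      = Option.bind (op x y) (\<lambda>u. op u w)"
    "Option.bind (restrict_op Q op y w) (restrict_op Q op x) = Option.bind (op y w) (op x)"
    if "x \<in> Q" "y \<in> Q" "w \<in> Q" for x y w
    using that closed[OF that(1,2)] closed[OF that(2,3)] eq
    by (cases "op x y"; cases "op y w"; simp)+
  have inE: "x \<in> Q \<Longrightarrow> x \<in> E" for x using Q(1) by blast
  note ax = E[unfolded gen_effect_algebra_def]
  show ?thesis
    unfolding gen_effect_algebra_def
  proof (intro conjI ballI allI impI)
    show "z \<in> Q" by (rule Q(2))
    fix x y w assume x: "x \<in> Q" and y: "y \<in> Q"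
    show "w \<in> Q" if "restrict_op Q op x y = Some w"
      using that by (simp add: restrict_op_def split: option.splits if_splits)
    show "restrict_op Q op x y = restrict_op Q op y x"
      using ax x y inE by (simp add: eq)
    show "Option.bind (restrict_op Q op x y) (\<lambda>u. restrict_op Q op u w)
        = Option.bind (restrict_op Q op y w) (restrict_op Q op x)" if "w \<in> Q"
      using ax x y that inE by (simp add: bind)
  next
    fix x assume "x \<in> Q"
    then show "restrict_op Q op x z = Some x" using ax inE Q(2) by (simp add: eq)
  next
    fix x y y' w assume "x \<in> Q" "y \<in> Q" "y' \<in> Q"
      "restrict_op Q op x y = Some w \<and> restrict_op Q op x y' = Some w"
    then show "y = y'" using ax inE by (simp add: eq) blast
  next
    fix x y assume "x \<in> Q" "y \<in> Q" "restrict_op Q op x y = Some z"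
    then show "x = z" "y = z" using ax inE by (simp_all add: eq) blast+
  qed
qed

lemma Rf_iff:
  assumes "(v::'h::chilbert) \<noteq> 0"
  shows "t \<in> (Rf :: 'h form set) \<longleftrightarrow> t \<in> Vf \<and> lsc_f t"
  unfolding Rf_def using regular_iff_closable[OF _ assms] closable_iff_lsc_f[OF _ assms] Vf_pos by blast

lemma oplus_Vf_in_Rf:
  assumes v: "(v::'h::chilbert) \<noteq> 0" and x: "x \<in> Rf" and y: "y \<in> Rf" and xy: "oplus_Vf x y = Some w"
  shows "w \<in> (Rf :: 'h form set)"
proof -
  have "compatible_f x y" and w: "w = add_f x y" using xy by (auto simp: oplus_Vf_eq split: if_splits)
  moreover have "x \<in> Vf" "y \<in> Vf" "lsc_f x" "lsc_f y" using x y Rf_iff[OF v] by auto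
  ultimately show ?thesis unfolding Rf_iff[OF v] w using add_compatible_in_Vf[of x y] lsc_f_add[of x y] by blast
qed

theorem gen_effect_algebra_Rf:
  assumes v: "(v::'h::chilbert) \<noteq> 0"
  shows "gen_effect_algebra (Rf :: 'h form set) (restrict_op Rf oplus_Vf) zero_f"
proof (rule gen_effect_algebra_restrict[OF gen_effect_algebra_Vf])
  show "zero_f \<in> (Rf :: 'h form set)" by (simp add: Rf_iff[OF v] zero_in_Vf lsc_f_def)
  show "Rf \<subseteq> Vf" by (auto simp: Rf_def)
  show "w \<in> Rf" if "x \<in> Rf" "y \<in> Rf" "oplus_Vf x y = Some w" for x y w :: "'h form"
    by (rule oplus_Vf_in_Rf[OF v that])
qed

section \<open>A regular sum with a non-regular summand\<close>

definition orthonormal :: "'h::chilbert set \<Rightarrow> bool" where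
  "orthonormal S \<longleftrightarrow> (\<forall>e\<in>S. hinner e e = 1) \<and> (\<forall>e\<in>S. \<forall>e'\<in>S. e \<noteq> e' \<longrightarrow> hinner e e' = 0)"

lemma exists_unit_orthogonal:
  assumes inf: "infinite_dimensional TYPE('h::chilbert)" and S: "finite (S :: 'h set)" and on: "orthonormal S"
  shows "\<exists>u. norm u = 1 \<and> (\<forall>e\<in>S. hinner u e = 0)"
proof -
  obtain x :: 'h where x: "\<not> (\<exists>c. x = (\<Sum>s\<in>S. hscale (c s) s))"
    using inf S unfolding infinite_dimensional_def by blast
  define w where "w = x - (\<Sum>e\<in>S. hscale (hinner x e) e)"
  have wo: "hinner w e0 = 0" if e0: "e0 \<in> S" for e0
  proof -
    have "hinner (\<Sum>e\<in>S. hscale (hinner x e) e) e0 = (\<Sum>e\<in>S. hinner x e * hinner e e0)"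
      by (simp add: hinner_sum_left hinner_hscale_left)
    also have "\<dots> = (\<Sum>e\<in>S. if e = e0 then hinner x e else 0)"
      by (rule sum.cong) (use on e0 in \<open>auto simp: orthonormal_def\<close>)
    also have "\<dots> = hinner x e0" using S e0 by simp
    finally show ?thesis by (simp add: w_def hinner_diff_left)
  qed
  have "w \<noteq> 0" using x by (auto simp: w_def)
  then have nw: "norm w > 0" by simp
  define u where "u = hscale (complex_of_real (1 / norm w)) w"
  have "norm u = 1" using nw by (simp add: u_def norm_hscale norm_divide)
  moreover have "\<forall>e\<in>S. hinner u e = 0" using wo by (simp add: u_def hinner_hscale_left)
  ultimately show ?thesis by blast
qed

definition next_orth :: "'h::chilbert list \<Rightarrow> 'h" where
  "next_orth l = (SOME u. norm u = 1 \<and> (\<forall>e\<in>set l. hinner u e = 0))"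

primrec orth_list :: "nat \<Rightarrow> 'h::chilbert list" where
  "orth_list 0 = []"
| "orth_list (Suc n) = orth_list n @ [next_orth (orth_list n)]"

definition orth_seq :: "nat \<Rightarrow> 'h::chilbert" where
  "orth_seq n = next_orth (orth_list n)"

lemma orth_list_set: "set (orth_list n) = orth_seq ` {..<n}"
  by (induction n) (auto simp: orth_seq_def lessThan_Suc)

lemma hinner_self_norm1: "norm u = 1 \<Longrightarrow> hinner u u = 1"
  by (simp add: hinner_self)

context
  assumes inf: "infinite_dimensional TYPE('h::chilbert)"
begin

lemma orth_list_ON: "orthonormal (set (orth_list n :: 'h list)) \<and> (\<forall>k<n. norm (orth_seq k :: 'h) = 1 \<and> (\<forall>j<k. hinner (orth_seq k :: 'h) (orth_seq j) = 0))"
proof (induction n)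
  case 0 then show ?case by (simp add: orthonormal_def)
next
  case (Suc n)
  have ex: "\<exists>u::'h. norm u = 1 \<and> (\<forall>e\<in>set (orth_list n). hinner u e = 0)"
    by (rule exists_unit_orthogonal[OF inf]) (use Suc in auto)
  have u: "norm (orth_seq n :: 'h) = 1" "\<forall>e\<in>set (orth_list n :: 'h list). hinner (orth_seq n) e = 0"
    using someI_ex[OF ex] by (simp_all add: orth_seq_def next_orth_def)
  have unot: "orth_seq n \<notin> set (orth_list n :: 'h list)"
    using u hinner_self_norm1[OF u(1)] by auto
  have on: "orthonormal (set (orth_list n :: 'h list))" using Suc by simp
  have "orthonormal (set (orth_list (Suc n) :: 'h list))"
    unfolding orthonormal_def
  proof (intro conjI ballI impI)
    fix e assume "e \<in> set (orth_list (Suc n) :: 'h list)"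
    then have "e \<in> set (orth_list n) \<or> e = orth_seq n" by (auto simp: orth_seq_def)
    then show "hinner e e = 1" using on u(1) by (auto simp: orthonormal_def hinner_self_norm1)
  next
    fix e e' assume "e \<in> set (orth_list (Suc n) :: 'h list)" "e' \<in> set (orth_list (Suc n) :: 'h list)" "e \<noteq> e'"
    then have h: "e \<in> set (orth_list n) \<or> e = orth_seq n" "e' \<in> set (orth_list n) \<or> e' = orth_seq n" by (auto simp: orth_seq_def)
    show "hinner e e' = 0"
      using h on u(2) \<open>e \<noteq> e'\<close> by (auto simp: orthonormal_def hinner_commute[of e "orth_seq n"])
  qed
  moreover have "\<forall>k<Suc n. norm (orth_seq k :: 'h) = 1 \<and> (\<forall>j<k. hinner (orth_seq k :: 'h) (orth_seq j) = 0)"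
  proof (intro allI impI)
    fix k assume "k < Suc n"
    then have "k < n \<or> k = n" by auto
    then show "norm (orth_seq k :: 'h) = 1 \<and> (\<forall>j<k. hinner (orth_seq k :: 'h) (orth_seq j) = 0)"
    proof
      assume "k < n" then show ?thesis using Suc by simp
    next
      assume k: "k = n"
      show ?thesis using u k orth_list_set[of n] by auto
    qed
  qed
  ultimately show ?case by simp
qed

lemma orth_seq_orth: "hinner (orth_seq i :: 'h) (orth_seq j) = (if i = j then 1 else 0)"
proof -
  have a: "norm (orth_seq k :: 'h) = 1" "j < k \<Longrightarrow> hinner (orth_seq k :: 'h) (orth_seq j) = 0" for k j
    using orth_list_ON[of "Suc k"] by auto
  show ?thesis
  proof (cases i j rule: linorder_cases)
    case less then show ?thesis using a(2)[of i j] hinner_commute[of "orth_seq i :: 'h" "orth_seq j"] by simp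
  next
    case equal then show ?thesis using hinner_self_norm1[OF a(1)[of j]] by simp
  next
    case greater then show ?thesis using a(2) by simp
  qed
qed

end

locale orthonormal_seq =
  fixes e :: "nat \<Rightarrow> 'h::chilbert"
  assumes orth: "hinner (e i) (e j) = (if i = j then 1 else 0)"
begin

definition fcoeff :: "nat \<Rightarrow> 'h \<Rightarrow> complex" where "fcoeff n u = hinner u (e n)"
definition lincomb :: "(nat \<Rightarrow> complex) \<Rightarrow> nat set \<Rightarrow> 'h" where "lincomb a F = (\<Sum>n\<in>F. hscale (a n) (e n))"

lemma fcoeff_add: "fcoeff n (u + w) = fcoeff n u + fcoeff n w" by (simp add: fcoeff_def hinner_add_left)
lemma fcoeff_diff: "fcoeff n (u - w) = fcoeff n u - fcoeff n w" by (simp add: fcoeff_def hinner_diff_left)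
lemma fcoeff_hscale: "fcoeff n (hscale a u) = a * fcoeff n u" by (simp add: fcoeff_def hinner_hscale_left)
lemma fcoeff_zero[simp]: "fcoeff n 0 = 0" by (simp add: fcoeff_def)
lemma fcoeff_e: "fcoeff k (e n) = (if n = k then 1 else 0)" by (simp add: fcoeff_def orth)

lemma fcoeff_lincomb: "finite F \<Longrightarrow> fcoeff k (lincomb a F) = (if k \<in> F then a k else 0)"
proof -
  assume F: "finite F"
  have "fcoeff k (lincomb a F) = (\<Sum>n\<in>F. a n * (if n = k then 1 else 0))"
    by (simp add: fcoeff_def lincomb_def hinner_sum_left hinner_hscale_left orth)
  also have "\<dots> = (\<Sum>n\<in>F. if n = k then a k else 0)" by (rule sum.cong) auto
  also have "\<dots> = (if k \<in> F then a k else 0)" using F by simp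
  finally show ?thesis .
qed

lemma hinner_lincomb_right: "hinner u (lincomb a F) = (\<Sum>n\<in>F. cnj (a n) * fcoeff n u)"
  by (simp add: lincomb_def fcoeff_def hinner_sum_right hinner_hscale_right)

lemma norm_lincomb: "finite F \<Longrightarrow> (norm (lincomb a F))^2 = (\<Sum>n\<in>F. (cmod (a n))^2)"
proof -
  assume F: "finite F"
  have "(norm (lincomb a F))^2 = Re (hinner (lincomb a F) (lincomb a F))" by (simp add: hinner_self_Re)
  also have "\<dots> = Re (\<Sum>n\<in>F. cnj (a n) * a n)"
    by (simp add: hinner_lincomb_right fcoeff_lincomb[OF F] cong: sum.cong)
  also have "\<dots> = (\<Sum>n\<in>F. (cmod (a n))^2)"
  proof -
    have "cnj z * z = complex_of_real ((cmod z)^2)" for z by (metis complex_norm_square mult.commute)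
    then show ?thesis by (simp only: Re_sum Re_complex_of_real)
  qed
  finally show ?thesis .
qed

lemma bessel: "(\<Sum>n<N. (cmod (fcoeff n u))^2) \<le> (norm u)^2"
proof -
  define P where "P = lincomb (\<lambda>n. fcoeff n u) {..<N}"
  define S where "S = (\<Sum>n<N. (cmod (fcoeff n u))^2)"
  have hu0: "hinner u P = (\<Sum>n<N. cnj (fcoeff n u) * fcoeff n u)" by (simp add: P_def hinner_lincomb_right)
  have "complex_of_real S = (\<Sum>n<N. complex_of_real ((cmod (fcoeff n u))^2))" by (simp only: S_def of_real_sum)
  also have "\<dots> = (\<Sum>n<N. fcoeff n u * cnj (fcoeff n u))" by (simp only: complex_norm_square)
  finally have hu: "hinner u P = complex_of_real S" using hu0 by (simp add: mult.commute)
  have hP: "hinner P u = complex_of_real S" using hu hinner_commute[of P u] by simp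
  have PP: "(norm P)^2 = S" by (simp add: P_def S_def norm_lincomb)
  have "0 \<le> (norm (u - P))^2" by simp
  also have "\<dots> = Re (hinner (u - P) (u - P))" by (simp add: hinner_self_Re)
  also have "\<dots> = (norm u)^2 - S - S + S"
    by (simp add: hinner_diff_left hinner_diff_right hu hP hinner_self_Re PP[symmetric])
  finally show ?thesis by (simp add: S_def)
qed

lemma summable_fcoeff_sq: "summable (\<lambda>n. (cmod (fcoeff n u))^2)"
proof (rule bounded_imp_summable)
  fix N show "(\<Sum>n\<le>N. (cmod (fcoeff n u))^2) \<le> (norm u)^2"
    using bessel[where N="Suc N" and u=u] by (simp add: lessThan_Suc_atMost)
qed simp

lemma summable_lincomb_series:
  assumes a: "summable (\<lambda>n. (cmod (a n))^2)"
  shows "summable (\<lambda>n. hscale (a n) (e n))"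
  unfolding summable_Cauchy
proof (intro allI impI)
  fix r :: real assume r: "r > 0"
  obtain N where N: "\<forall>m\<ge>N. \<forall>n. norm (\<Sum>k\<in>{m..<n}. (cmod (a k))^2) < r^2"
    using a[unfolded summable_Cauchy] r by (meson zero_less_power)
  show "\<exists>N. \<forall>m\<ge>N. \<forall>n. norm (\<Sum>k\<in>{m..<n}. hscale (a k) (e k)) < r"
  proof (intro exI[of _ N] allI impI)
    fix m n assume m: "m \<ge> N"
    have "(norm (\<Sum>k\<in>{m..<n}. hscale (a k) (e k)))^2 = (\<Sum>k\<in>{m..<n}. (cmod (a k))^2)"
      using norm_lincomb[of "{m..<n}" a] by (simp add: lincomb_def)
    also have "\<dots> < r^2" using N m by (simp add: sum_nonneg)
    finally show "norm (\<Sum>k\<in>{m..<n}. hscale (a k) (e k)) < r"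
      using r by (simp add: power_less_imp_less_base)
  qed
qed

lemma fcoeff_suminf:
  assumes a: "summable (\<lambda>n. (cmod (a n))^2)"
  shows "fcoeff k (\<Sum>n. hscale (a n) (e n)) = a k"
proof -
  have "fcoeff k (\<Sum>n. hscale (a n) (e n)) = (\<Sum>n. fcoeff k (hscale (a n) (e n)))"
    unfolding fcoeff_def by (rule bounded_linear.suminf[OF bounded_linear_hinner_left summable_lincomb_series[OF a]])
  also have "\<dots> = (\<Sum>n. if n = k then a k else 0)"
    by (simp add: fcoeff_hscale fcoeff_e if_distrib cong: if_cong)
  also have "\<dots> = a k" by (subst suminf_finite[of "{k}"]) auto
  finally show ?thesis .
qed

definition wdom :: "'h set" where
  "wdom = {u. summable (\<lambda>n. 4^n * (cmod (fcoeff n u))^2)}"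

lemma cmod_add_sq_le: "(cmod (a + b))^2 \<le> 2 * (cmod a)^2 + 2 * (cmod b)^2"
proof -
  have "(cmod (a + b))^2 \<le> (cmod a + cmod b)^2" by (rule power_mono[OF norm_triangle_ineq norm_ge_zero])
  moreover have "0 \<le> (cmod a - cmod b)^2" by simp
  ultimately show ?thesis unfolding power2_diff power2_sum by linarith
qed

lemma wdom_add: assumes x: "x \<in> wdom" and y: "y \<in> wdom" shows "x + y \<in> wdom"
proof -
  have g: "summable (\<lambda>n. 2 * (4^n * (cmod (fcoeff n x))^2) + 2 * (4^n * (cmod (fcoeff n y))^2))"
    using x y unfolding wdom_def by (intro summable_add summable_mult) auto
  have b: "norm (4^n * (cmod (fcoeff n (x + y)))^2) \<le> 2 * (4^n * (cmod (fcoeff n x))^2) + 2 * (4^n * (cmod (fcoeff n y))^2)" for n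
  proof -
    have "4^n * (cmod (fcoeff n (x + y)))^2 \<le> 4^n * (2 * (cmod (fcoeff n x))^2 + 2 * (cmod (fcoeff n y))^2)"
      unfolding fcoeff_add by (intro mult_left_mono cmod_add_sq_le) auto
    then show ?thesis by (simp add: algebra_simps)
  qed
  show ?thesis unfolding wdom_def
    by (rule CollectI, rule summable_comparison_test[OF _ g]) (use b in blast)
qed

lemma wdom_hscale: assumes x: "x \<in> wdom" shows "hscale a x \<in> wdom"
proof -
  have "summable (\<lambda>n. (cmod a)^2 * (4^n * (cmod (fcoeff n x))^2))"
    using x by (intro summable_mult) (simp add: wdom_def)
  moreover have "(cmod a)^2 * (4^n * (cmod (fcoeff n x))^2) = 4^n * (cmod (fcoeff n (hscale a x)))^2" for n
    by (simp add: fcoeff_hscale norm_mult power_mult_distrib)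
  ultimately show ?thesis by (simp add: wdom_def)
qed

lemma wdom_sub: "csubspace wdom"
  unfolding csubspace_def using wdom_add wdom_hscale by (simp add: wdom_def)

lemma lincomb_in_wdom: "finite F \<Longrightarrow> lincomb a F \<in> wdom"
  unfolding wdom_def by (auto intro!: summable_finite[of F] simp: fcoeff_lincomb)

lemma e_in_wdom: "e n \<in> wdom"
  unfolding wdom_def by (auto intro!: summable_finite[of "{n}"] simp: fcoeff_e split: if_splits)

lemma wdom_dense: "closure wdom = UNIV"
proof -
  have "u \<in> closure wdom" for u
  proof -
    define P where "P = (\<Sum>n. hscale (fcoeff n u) (e n))"
    have sP: "summable (\<lambda>n. hscale (fcoeff n u) (e n))" by (rule summable_lincomb_series[OF summable_fcoeff_sq])
    have cP: "fcoeff k P = fcoeff k u" for k unfolding P_def by (rule fcoeff_suminf[OF summable_fcoeff_sq])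
    define U where "U N = u - P + lincomb (\<lambda>n. fcoeff n u) {..<N}" for N
    have UD: "U N \<in> wdom" for N
    proof -
      have "fcoeff k (U N) = (if k < N then fcoeff k u else 0)" for k
        by (simp add: U_def fcoeff_add fcoeff_diff cP fcoeff_lincomb)
      then show ?thesis unfolding wdom_def by (auto intro!: summable_finite[of "{..<N}"] split: if_splits)
    qed
    have "(\<lambda>N. lincomb (\<lambda>n. fcoeff n u) {..<N}) \<longlonglongrightarrow> P"
      unfolding lincomb_def P_def by (rule summable_LIMSEQ[OF sP])
    then have "U \<longlonglongrightarrow> u - P + P" unfolding U_def by (intro tendsto_intros)
    then show ?thesis unfolding closure_sequential using UD by auto
  qed
  then show ?thesis by auto
qed

end

lemma four_pow: "(4::real)^n = 2^n * 2^n" by (simp flip: power_mult_distrib)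

lemma le_four_pow_sq_plus: "(a::real) \<le> 4^n * a^2 + (1/4)^n"
proof -
  define q :: real where "q = 2^n"
  have q: "q > 0" by (simp add: q_def)
  have h1: "(4::real)^n = q * q" by (simp add: q_def four_pow)
  have h2: "(1/4::real)^n = 1 / (q * q)" by (simp add: h1 power_divide)
  have "0 \<le> (q * a - 1 / q)^2" by simp
  also have "\<dots> = q * q * a^2 - 2 * a + 1 / (q * q)"
    using q by (simp add: power2_eq_square field_simps)
  finally have "2 * a \<le> 4^n * a^2 + (1/4)^n" by (simp add: h1 h2)
  moreover have "0 \<le> 4^n * a^2 + (1/4::real)^n" by simp
  ultimately show ?thesis by linarith
qed

lemma four_pow_sq_cross_nonneg: "0 \<le> 4^n * (cmod c)^2 + 2 * Re (cnj l * c) + (cmod l)^2 * (1/4)^n"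
proof -
  define q :: real where "q = 2^n"
  have q: "q > 0" by (simp add: q_def)
  have h1: "(4::real)^n = q * q" by (simp add: q_def four_pow)
  have h2: "(1/4::real)^n = 1 / (q * q)" by (simp add: h1 power_divide)
  have r: "- (cmod l * cmod c) \<le> Re (cnj l * c)"
    using abs_Re_le_cmod[of "cnj l * c"] by (simp add: norm_mult)
  have "0 \<le> (q * cmod c - cmod l / q)^2" by simp
  also have "\<dots> = q * q * (cmod c)^2 - 2 * (cmod l * cmod c) + (cmod l)^2 * (1 / (q * q))"
    using q by (simp add: power2_eq_square field_simps)
  finally show ?thesis using r by (simp add: h1 h2)
qed

lemma mult_le_sq_plus_sq: "0 \<le> a \<Longrightarrow> 0 \<le> b \<Longrightarrow> (a::real) * b \<le> a^2 + b^2"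
proof -
  assume "0 \<le> a" "0 \<le> b"
  moreover have "0 \<le> (a - b)^2" by simp
  moreover have "0 \<le> a * b" using \<open>0 \<le> a\<close> \<open>0 \<le> b\<close> by simp
  ultimately show ?thesis unfolding power2_diff by linarith
qed

context orthonormal_seq
begin

definition wquad :: "'h \<Rightarrow> real" where "wquad u = (\<Sum>n. 4^n * (cmod (fcoeff n u))^2)"
definition wval :: "'h \<Rightarrow> 'h \<Rightarrow> complex" where
  "wval u w = (\<Sum>n. complex_of_real (4^n) * (fcoeff n u * cnj (fcoeff n w)))"
definition fcoeff_sum :: "'h \<Rightarrow> complex" where "fcoeff_sum u = (\<Sum>n. fcoeff n u)"
definition diag_form :: "'h form" where "diag_form = (wdom, \<lambda>u w. if u \<in> wdom \<and> w \<in> wdom then wval u w else 0)"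
definition rank_one_form :: "'h form" where "rank_one_form = (wdom, \<lambda>u w. if u \<in> wdom \<and> w \<in> wdom then fcoeff_sum u * cnj (fcoeff_sum w) else 0)"

lemma summable_wquad: "u \<in> wdom \<Longrightarrow> summable (\<lambda>n. 4^n * (cmod (fcoeff n u))^2)" by (simp add: wdom_def)

lemma summable_wval: assumes u: "u \<in> wdom" and w: "w \<in> wdom"
  shows "summable (\<lambda>n. complex_of_real (4^n) * (fcoeff n u * cnj (fcoeff n w)))"
proof (rule summable_comparison_test[OF exI[of _ 0] summable_add[OF summable_wquad[OF u] summable_wquad[OF w]]], intro allI impI)
  fix n :: nat
  have "norm (complex_of_real (4^n) * (fcoeff n u * cnj (fcoeff n w))) = 4^n * (cmod (fcoeff n u) * cmod (fcoeff n w))"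
    by (simp add: norm_mult norm_power)
  also have "\<dots> \<le> 4^n * ((cmod (fcoeff n u))^2 + (cmod (fcoeff n w))^2)"
    by (intro mult_left_mono mult_le_sq_plus_sq) auto
  finally show "norm (complex_of_real (4^n) * (fcoeff n u * cnj (fcoeff n w))) \<le>
      4^n * (cmod (fcoeff n u))^2 + 4^n * (cmod (fcoeff n w))^2" by (simp add: algebra_simps)
qed

lemma summable_fcoeff: assumes u: "u \<in> wdom" shows "summable (\<lambda>n. fcoeff n u)"
proof (rule summable_comparison_test[OF exI[of _ 0] summable_add[OF summable_wquad[OF u] summable_geometric[of "1/4::real"]]],
    intro allI impI)
  fix n :: nat
  show "norm (fcoeff n u) \<le> 4^n * (cmod (fcoeff n u))^2 + (1/4)^n" by (rule le_four_pow_sq_plus)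
qed simp

lemma wval_add_left: assumes "u \<in> wdom" "u' \<in> wdom" "w \<in> wdom" shows "wval (u + u') w = wval u w + wval u' w"
proof -
  have "(\<lambda>n. complex_of_real (4^n) * (fcoeff n (u + u') * cnj (fcoeff n w))) =
    (\<lambda>n. complex_of_real (4^n) * (fcoeff n u * cnj (fcoeff n w)) + complex_of_real (4^n) * (fcoeff n u' * cnj (fcoeff n w)))"
    by (simp add: fcoeff_add algebra_simps)
  then show ?thesis unfolding wval_def using suminf_add[OF summable_wval summable_wval] assms by simp
qed

lemma wval_add_right: assumes "u \<in> wdom" "u' \<in> wdom" "w \<in> wdom" shows "wval w (u + u') = wval w u + wval w u'"
proof -
  have "(\<lambda>n. complex_of_real (4^n) * (fcoeff n w * cnj (fcoeff n (u + u')))) =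
    (\<lambda>n. complex_of_real (4^n) * (fcoeff n w * cnj (fcoeff n u)) + complex_of_real (4^n) * (fcoeff n w * cnj (fcoeff n u')))"
    by (simp add: fcoeff_add algebra_simps)
  then show ?thesis unfolding wval_def using suminf_add[OF summable_wval summable_wval] assms by simp
qed

lemma wval_hscale_left: assumes "u \<in> wdom" "w \<in> wdom" shows "wval (hscale a u) w = a * wval u w"
proof -
  have "(\<lambda>n. complex_of_real (4^n) * (fcoeff n (hscale a u) * cnj (fcoeff n w))) =
    (\<lambda>n. a * (complex_of_real (4^n) * (fcoeff n u * cnj (fcoeff n w))))"
    by (simp add: fcoeff_hscale algebra_simps)
  then show ?thesis unfolding wval_def using suminf_mult[OF summable_wval[OF assms], of a] by simp
qed

lemma wval_hscale_right: assumes "u \<in> wdom" "w \<in> wdom" shows "wval w (hscale a u) = cnj a * wval w u"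
proof -
  have "(\<lambda>n. complex_of_real (4^n) * (fcoeff n w * cnj (fcoeff n (hscale a u)))) =
    (\<lambda>n. cnj a * (complex_of_real (4^n) * (fcoeff n w * cnj (fcoeff n u))))"
    by (simp add: fcoeff_hscale algebra_simps)
  then show ?thesis unfolding wval_def using suminf_mult[OF summable_wval[OF assms(2,1)], of "cnj a"] by simp
qed

lemma wval_diag: assumes u: "u \<in> wdom" shows "wval u u = complex_of_real (wquad u)"
proof -
  have eq: "(\<lambda>n. complex_of_real (4^n) * (fcoeff n u * cnj (fcoeff n u))) =
    (\<lambda>n. complex_of_real (4^n * (cmod (fcoeff n u))^2))"
    by (rule ext) (simp only: of_real_mult complex_norm_square)
  show ?thesis unfolding wval_def wquad_def eq by (rule suminf_of_real[OF summable_wquad[OF u], symmetric])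
qed

lemma fcoeff_sum_add: "u \<in> wdom \<Longrightarrow> u' \<in> wdom \<Longrightarrow> fcoeff_sum (u + u') = fcoeff_sum u + fcoeff_sum u'"
  unfolding fcoeff_sum_def by (simp add: fcoeff_add suminf_add[OF summable_fcoeff summable_fcoeff])

lemma fcoeff_sum_hscale: "u \<in> wdom \<Longrightarrow> fcoeff_sum (hscale a u) = a * fcoeff_sum u"
  unfolding fcoeff_sum_def by (simp add: fcoeff_hscale suminf_mult[OF summable_fcoeff])

lemma diag_form_simps: "dom_f diag_form = wdom" "u \<in> wdom \<Longrightarrow> w \<in> wdom \<Longrightarrow> val_f diag_form u w = wval u w"
  by (simp_all add: diag_form_def)

lemma rank_one_form_simps: "dom_f rank_one_form = wdom" "u \<in> wdom \<Longrightarrow> w \<in> wdom \<Longrightarrow> val_f rank_one_form u w = fcoeff_sum u * cnj (fcoeff_sum w)"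
  by (simp_all add: rank_one_form_def)

lemma wquad_nonneg: "u \<in> wdom \<Longrightarrow> 0 \<le> wquad u"
  unfolding wquad_def by (intro suminf_nonneg summable_wquad) auto

lemma positive_diag_form: "positive_f diag_form"
  unfolding positive_f_def is_form_def diag_form_simps(1)
proof (intro conjI allI ballI impI wdom_sub wdom_dense)
  fix x y assume "\<not> (x \<in> wdom \<and> y \<in> wdom)" then show "val_f diag_form x y = 0" by (auto simp: diag_form_def)
next
  fix x x' y assume h: "x \<in> wdom" "x' \<in> wdom" "y \<in> wdom"
  show "val_f diag_form (x + x') y = val_f diag_form x y + val_f diag_form x' y"
    using h wdom_add[OF h(1,2)] by (simp add: diag_form_simps wval_add_left)
  show "val_f diag_form y (x + x') = val_f diag_form y x + val_f diag_form y x'"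
    using h wdom_add[OF h(1,2)] by (simp add: diag_form_simps wval_add_right)
next
  fix a x y assume h: "x \<in> wdom" "y \<in> wdom"
  show "val_f diag_form (hscale a x) y = a * val_f diag_form x y"
    using h wdom_hscale[OF h(1)] by (simp add: diag_form_simps wval_hscale_left)
  show "val_f diag_form y (hscale a x) = cnj a * val_f diag_form y x"
    using h wdom_hscale[OF h(1)] by (simp add: diag_form_simps wval_hscale_right)
next
  fix x assume h: "x \<in> wdom"
  show "Im (val_f diag_form x x) = 0" "0 \<le> Re (val_f diag_form x x)"
    using h by (simp_all add: diag_form_simps wval_diag wquad_nonneg)
qed

lemma positive_rank_one_form: "positive_f rank_one_form"
  unfolding positive_f_def is_form_def rank_one_form_simps(1)
proof (intro conjI allI ballI impI wdom_sub wdom_dense)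
  fix x y assume "\<not> (x \<in> wdom \<and> y \<in> wdom)" then show "val_f rank_one_form x y = 0" by (auto simp: rank_one_form_def)
next
  fix x x' y assume h: "x \<in> wdom" "x' \<in> wdom" "y \<in> wdom"
  show "val_f rank_one_form (x + x') y = val_f rank_one_form x y + val_f rank_one_form x' y"
    using h wdom_add[OF h(1,2)] by (simp add: rank_one_form_simps fcoeff_sum_add algebra_simps)
  show "val_f rank_one_form y (x + x') = val_f rank_one_form y x + val_f rank_one_form y x'"
    using h wdom_add[OF h(1,2)] by (simp add: rank_one_form_simps fcoeff_sum_add algebra_simps)
next
  fix a x y assume h: "x \<in> wdom" "y \<in> wdom"
  show "val_f rank_one_form (hscale a x) y = a * val_f rank_one_form x y"
    using h wdom_hscale[OF h(1)] by (simp add: rank_one_form_simps fcoeff_sum_hscale)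
  show "val_f rank_one_form y (hscale a x) = cnj a * val_f rank_one_form y x"
    using h wdom_hscale[OF h(1)] by (simp add: rank_one_form_simps fcoeff_sum_hscale)
next
  fix x assume h: "x \<in> wdom"
  have "fcoeff_sum x * cnj (fcoeff_sum x) = complex_of_real ((cmod (fcoeff_sum x))^2)" by (simp only: complex_norm_square)
  then show "Im (val_f rank_one_form x x) = 0" "0 \<le> Re (val_f rank_one_form x x)"
    using h by (simp_all add: rank_one_form_simps)
qed

lemma quad_f_diag_form: "u \<in> wdom \<Longrightarrow> quad_f diag_form u = wquad u"
  by (simp add: quad_f_def diag_form_simps wval_diag)

lemma quad_f_rank_one_form: "u \<in> wdom \<Longrightarrow> quad_f rank_one_form u = (cmod (fcoeff_sum u))^2"
proof -
  have "fcoeff_sum u * cnj (fcoeff_sum u) = complex_of_real ((cmod (fcoeff_sum u))^2)" by (simp only: complex_norm_square)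
  then show "u \<in> wdom \<Longrightarrow> quad_f rank_one_form u = (cmod (fcoeff_sum u))^2" by (simp add: quad_f_def rank_one_form_simps)
qed

lemma norm_e: "norm (e n) = 1"
proof -
  have "(norm (e n))^2 = 1" using hinner_self_Re[of "e n"] orth[of n n] by simp
  then have "sqrt 1 = norm (e n)" by (intro real_sqrt_unique) auto
  then show ?thesis by simp
qed

lemma wquad_e: "wquad (e n) = 4^n"
  unfolding wquad_def by (subst suminf_finite[of "{n}"]) (auto simp: fcoeff_e)

lemma fcoeff_sum_lincomb: "finite F \<Longrightarrow> fcoeff_sum (lincomb a F) = (\<Sum>k\<in>F. a k)"
  unfolding fcoeff_sum_def by (subst suminf_finite[of F]) (auto simp: fcoeff_lincomb)

lemma fcoeff_sum_e: "fcoeff_sum (e n) = 1"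
  unfolding fcoeff_sum_def by (subst suminf_finite[of "{n}"]) (auto simp: fcoeff_e)

lemma unbounded_by_e:
  assumes "positive_f t" "dom_f t = wdom" and ge: "\<And>n. 4^n \<le> quad_f t (e n)"
  shows "\<not> bounded_f t"
proof
  assume "bounded_f t"
  then obtain B where B: "\<And>x. x \<in> dom_f t \<Longrightarrow> norm x = 1 \<Longrightarrow> quad_f t x \<le> B" using bounded_fD by blast
  obtain n where n: "B < 4^n" using real_arch_pow[of 4 B] by auto
  have "4^n \<le> B" using ge[of n] B[of "e n"] assms(2) e_in_wdom norm_e by force
  with n show False by simp
qed

lemma diag_form_unbounded: "\<not> bounded_f diag_form"
  by (rule unbounded_by_e[OF positive_diag_form diag_form_simps(1)]) (simp add: quad_f_diag_form e_in_wdom wquad_e)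

lemma rank_one_form_unbounded: "\<not> bounded_f rank_one_form"
proof
  assume "bounded_f rank_one_form"
  then obtain B where B: "\<And>x. x \<in> wdom \<Longrightarrow> norm x = 1 \<Longrightarrow> quad_f rank_one_form x \<le> B" using bounded_fD rank_one_form_simps(1) by metis
  obtain N :: nat where N: "max B 0 < real N" using reals_Archimedean2 by blast
  have N0: "N > 0" using N by (cases N) auto
  define s where "s = lincomb (\<lambda>_. 1) {..<N}"
  have ns: "(norm s)^2 = real N" by (simp add: s_def norm_lincomb)
  have ps: "fcoeff_sum s = of_nat N" by (simp add: s_def fcoeff_sum_lincomb)
  have nsp: "norm s = sqrt (real N)" using ns by (metis norm_ge_zero real_sqrt_unique)
  define z where "z = hscale (complex_of_real (1 / sqrt (real N))) s"
  have zD: "z \<in> wdom" by (simp add: z_def s_def wdom_hscale lincomb_in_wdom)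
  have nz: "norm z = 1" using N0 by (simp add: z_def norm_hscale norm_divide nsp)
  have "quad_f rank_one_form z = (cmod (fcoeff_sum z))^2" by (rule quad_f_rank_one_form[OF zD])
  also have "\<dots> = real N"
  proof -
    have sD: "s \<in> wdom" by (simp add: s_def lincomb_in_wdom)
    have pz: "fcoeff_sum z = complex_of_real (1 / sqrt (real N)) * of_nat N"
      unfolding z_def using fcoeff_sum_hscale[OF sD] ps by simp
    have "cmod (fcoeff_sum z) = real N / sqrt (real N)" unfolding pz by (simp add: norm_mult norm_divide)
    then have "(cmod (fcoeff_sum z))^2 = (real N)^2 / real N" by (simp add: power_divide)
    also have "\<dots> = real N" using N0 by (simp add: power2_eq_square)
    finally show ?thesis .
  qed
  finally have "real N \<le> B" using B[OF zD nz] by simp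
  with N show False by simp
qed

end

lemma lsc_f_by_minorants:
  assumes h: "\<And>x d. x \<in> dom_f t \<Longrightarrow> d > 0 \<Longrightarrow>
     \<exists>G. continuous_on UNIV G \<and> (\<forall>z\<in>dom_f t. G z \<le> quad_f t z) \<and> quad_f t x - d/2 < G x"
  shows "lsc_f t"
  unfolding lsc_f_def
proof (intro ballI allI impI)
  fix x and d :: real assume x: "x \<in> dom_f t" and d: "d > 0"
  obtain G where G: "continuous_on UNIV G" "\<And>z. z \<in> dom_f t \<Longrightarrow> G z \<le> quad_f t z" "quad_f t x - d/2 < G x"
    using h[OF x d] by blast
  obtain e where e: "e > 0" "\<And>z. dist z x < e \<Longrightarrow> dist (G z) (G x) < d/2"
    using G(1) d unfolding continuous_on_iff by (metis UNIV_I half_gt_zero)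
  show "\<exists>e>0. \<forall>z\<in>dom_f t. dist z x < e \<longrightarrow> quad_f t x - d \<le> quad_f t z"
  proof (intro exI[of _ e] conjI ballI impI e(1))
    fix z assume z: "z \<in> dom_f t" "dist z x < e"
    have "dist (G z) (G x) < d/2" by (rule e(2)[OF z(2)])
    then have "G x - d/2 < G z" unfolding dist_real_def abs_less_iff by linarith
    then show "quad_f t x - d \<le> quad_f t z" using G(2)[OF z(1)] G(3) by linarith
  qed
qed

lemma cmod_diff_sq: "(cmod (p - l))^2 = (cmod p)^2 + (cmod l)^2 - 2 * Re (cnj l * p)"
  unfolding cmod_power2 by (simp add: power2_eq_square algebra_simps)

lemma cmod_sq_Re: "(cmod c)^2 = Re (cnj c * c)"
  unfolding cmod_power2 by (simp add: power2_eq_square algebra_simps)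

context orthonormal_seq
begin

lemma continuous_fcoeff: "continuous_on UNIV (\<lambda>z. fcoeff n z)"
  unfolding fcoeff_def by (rule continuous_hinner_left)

lemma lsc_f_diag_form: "lsc_f diag_form"
proof (rule lsc_f_by_minorants)
  fix u and d :: real assume u: "u \<in> dom_f diag_form" and d: "d > 0"
  then have uD: "u \<in> wdom" by (simp add: diag_form_simps)
  have "(\<lambda>N. \<Sum>n<N. 4^n * (cmod (fcoeff n u))^2) \<longlonglongrightarrow> wquad u"
    unfolding wquad_def by (rule summable_LIMSEQ[OF summable_wquad[OF uD]])
  then have "eventually (\<lambda>N. wquad u - d/2 < (\<Sum>n<N. 4^n * (cmod (fcoeff n u))^2)) sequentially"
    using d by (intro order_tendstoD(1)) auto
  then obtain N where N: "wquad u - d/2 < (\<Sum>n<N. 4^n * (cmod (fcoeff n u))^2)"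
    by (auto simp: eventually_sequentially)
  show "\<exists>G. continuous_on UNIV G \<and> (\<forall>z\<in>dom_f diag_form. G z \<le> quad_f diag_form z) \<and> quad_f diag_form u - d/2 < G u"
  proof (intro exI[of _ "\<lambda>z. \<Sum>n<N. 4^n * (cmod (fcoeff n z))^2"] conjI ballI)
    show "continuous_on UNIV (\<lambda>z. \<Sum>n<N. 4^n * (cmod (fcoeff n z))^2)"
      by (intro continuous_intros continuous_fcoeff)
    fix z assume "z \<in> dom_f diag_form"
    then have zD: "z \<in> wdom" by (simp add: diag_form_simps)
    show "(\<Sum>n<N. 4^n * (cmod (fcoeff n z))^2) \<le> quad_f diag_form z"
      unfolding quad_f_diag_form[OF zD] wquad_def by (rule sum_le_suminf[OF summable_wquad[OF zD]]) auto
  next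
    show "quad_f diag_form u - d/2 < (\<Sum>n<N. 4^n * (cmod (fcoeff n u))^2)" using N quad_f_diag_form[OF uD] by simp
  qed
qed

definition diag_rank_one_form :: "'h form" where "diag_rank_one_form = add_f diag_form rank_one_form"

lemma diag_rank_one_form_dom: "dom_f diag_rank_one_form = wdom" by (simp add: diag_rank_one_form_def add_f_simps diag_form_simps rank_one_form_simps)

lemma quad_f_diag_rank_one_form: "z \<in> wdom \<Longrightarrow> quad_f diag_rank_one_form z = wquad z + (cmod (fcoeff_sum z))^2"
  by (simp add: diag_rank_one_form_def quad_f_add_f diag_form_simps rank_one_form_simps quad_f_diag_form quad_f_rank_one_form)

lemma positive_diag_rank_one_form: "positive_f diag_rank_one_form"
  unfolding diag_rank_one_form_def by (rule positive_add_f[OF positive_diag_form positive_rank_one_form]) (simp add: diag_form_simps rank_one_form_simps wdom_dense)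

lemma cross_series_sums:
  assumes z: "z \<in> wdom"
  shows "(\<lambda>n. 4^n * (cmod (fcoeff n z))^2 + 2 * Re (cnj l * fcoeff n z) + (cmod l)^2 * (1/4)^n)
           sums (wquad z + 2 * Re (cnj l * fcoeff_sum z) + (cmod l)^2 * (4/3))"
proof -
  have "(\<lambda>n. cnj l * fcoeff n z) sums (cnj l * fcoeff_sum z)"
    using summable_sums[OF summable_fcoeff[OF z]] unfolding fcoeff_sum_def by (rule sums_mult)
  then have "(\<lambda>n. 2 * Re (cnj l * fcoeff n z)) sums (2 * Re (cnj l * fcoeff_sum z))"
    by (rule sums_mult[OF sums_Re])
  moreover have "(\<lambda>n. (cmod l)^2 * (1/4::real)^n) sums ((cmod l)^2 * (4/3))"
    using geometric_sums[of "1/4::real"] by (intro sums_mult) simp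
  moreover have "(\<lambda>n. 4^n * (cmod (fcoeff n z))^2) sums wquad z"
    unfolding wquad_def by (intro summable_sums summable_wquad z)
  ultimately show ?thesis by (intro sums_add)
qed

text \<open>With \<open>l = \<Sum>n. c\<^sub>n(u)\<close> the terms of \<open>cross_series_sums\<close> are nonnegative, and since
  \<open>\<bar>\<Sum>n. c\<^sub>n(z) - l\<bar>\<^sup>2 \<ge> 0\<close> its shifted partial sums are continuous minorants of the quadratic form
  that converge to its value at \<open>u\<close>.\<close>

lemma lsc_f_diag_rank_one_form: "lsc_f diag_rank_one_form"
proof (rule lsc_f_by_minorants)
  fix u and d :: real assume "u \<in> dom_f diag_rank_one_form" and d: "d > 0"
  then have uD: "u \<in> wdom" by (simp add: diag_rank_one_form_dom)
  define l where "l = fcoeff_sum u"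
  define a where "a n z = 4^n * (cmod (fcoeff n z))^2 + 2 * Re (cnj l * fcoeff n z) + (cmod l)^2 * (1/4)^n"
    for n z
  define G where "G N z = (\<Sum>n<N. a n z) - (cmod l)^2 * (4/3) - (cmod l)^2" for N z
  have a_sums: "(\<lambda>n. a n z) sums (wquad z + 2 * Re (cnj l * fcoeff_sum z) + (cmod l)^2 * (4/3))"
    if "z \<in> wdom" for z
    unfolding a_def by (rule cross_series_sums[OF that])
  have minor: "G N z \<le> quad_f diag_rank_one_form z" if z: "z \<in> wdom" for N z
  proof -
    have "(\<Sum>n<N. a n z) \<le> (\<Sum>n. a n z)"
      using four_pow_sq_cross_nonneg
      by (intro sum_le_suminf[OF sums_summable[OF a_sums[OF z]]]) (simp_all add: a_def)
    also have "\<dots> = wquad z + 2 * Re (cnj l * fcoeff_sum z) + (cmod l)^2 * (4/3)"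
      using a_sums[OF z] by (rule sums_unique[symmetric])
    finally have "G N z \<le> wquad z + 2 * Re (cnj l * fcoeff_sum z) - (cmod l)^2"
      by (simp add: G_def)
    moreover have "2 * Re (cnj l * fcoeff_sum z) \<le> (cmod (fcoeff_sum z))^2 + (cmod l)^2"
      using cmod_diff_sq[of "fcoeff_sum z" l] zero_le_power2[of "cmod (fcoeff_sum z - l)"] by linarith
    ultimately show ?thesis using quad_f_diag_rank_one_form[OF z] by simp
  qed
  have "(\<lambda>N. G N u)
      \<longlonglongrightarrow> (wquad u + 2 * Re (cnj l * l) + (cmod l)^2 * (4/3)) - (cmod l)^2 * (4/3) - (cmod l)^2"
    unfolding G_def using a_sums[OF uD] by (intro tendsto_intros) (simp add: l_def sums_def)
  moreover have "(wquad u + 2 * Re (cnj l * l) + (cmod l)^2 * (4/3)) - (cmod l)^2 * (4/3) - (cmod l)^2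
      = quad_f diag_rank_one_form u"
    using quad_f_diag_rank_one_form[OF uD] cmod_sq_Re[of l] by (simp add: l_def)
  ultimately have "eventually (\<lambda>N. quad_f diag_rank_one_form u - d/2 < G N u) sequentially"
    using d by (intro order_tendstoD(1)) auto
  then obtain N where N: "quad_f diag_rank_one_form u - d/2 < G N u" by (auto simp: eventually_sequentially)
  show "\<exists>G. continuous_on UNIV G \<and> (\<forall>z\<in>dom_f diag_rank_one_form. G z \<le> quad_f diag_rank_one_form z)
      \<and> quad_f diag_rank_one_form u - d/2 < G u"
  proof (intro exI[of _ "G N"] conjI ballI N)
    show "continuous_on UNIV (G N)" unfolding G_def a_def by (intro continuous_intros continuous_fcoeff)
    show "G N z \<le> quad_f diag_rank_one_form z" if "z \<in> dom_f diag_rank_one_form" for z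
      using minor that diag_rank_one_form_dom by simp
  qed
qed

lemma not_lsc_f_rank_one_form: "\<not> lsc_f rank_one_form"
proof
  assume L: "lsc_f rank_one_form"
  have e0: "e 0 \<in> wdom" by (rule e_in_wdom)
  have q0: "quad_f rank_one_form (e 0) = 1" using quad_f_rank_one_form[OF e0] fcoeff_sum_e by simp
  obtain r where r: "r > 0" "\<And>z. z \<in> wdom \<Longrightarrow> dist z (e 0) < r \<Longrightarrow> quad_f rank_one_form (e 0) - 1/2 \<le> quad_f rank_one_form z"
    using L e0 unfolding lsc_f_def rank_one_form_simps(1) by (metis half_gt_zero zero_less_one)
  obtain M :: nat where M: "1 / r^2 < real M" using reals_Archimedean2 by blast
  have M0: "M > 0" using M r by (cases M) (auto intro: order.strict_trans2[of _ 0])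
  define s where "s = lincomb (\<lambda>_. 1) {..<M}"
  have sD: "s \<in> wdom" by (simp add: s_def lincomb_in_wdom)
  have ns: "(norm s)^2 = real M" by (simp add: s_def norm_lincomb)
  have ps: "fcoeff_sum s = of_nat M" by (simp add: s_def fcoeff_sum_lincomb)
  define g where "g = hscale (complex_of_real (1 / real M)) s"
  have gD: "g \<in> wdom" by (simp add: g_def wdom_hscale sD)
  have pg: "fcoeff_sum g = 1" using fcoeff_sum_hscale[OF sD] ps M0 by (simp add: g_def)
  have "(norm g)^2 = (1 / real M)^2 * (norm s)^2"
    by (simp add: g_def norm_hscale power_mult_distrib norm_divide power_divide)
  then have ng2: "(norm g)^2 = 1 / real M" using ns M0 by (simp add: power2_eq_square)
  define z where "z = e 0 - g"
  have zD: "z \<in> wdom" using wdom_add[OF e0 wdom_hscale[OF gD, of "-1"]] by (simp add: z_def hscale_minus_one)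
  have pz: "fcoeff_sum z = 0"
    using fcoeff_sum_add[OF e0 wdom_hscale[OF gD, of "-1"]] fcoeff_sum_hscale[OF gD, of "-1"] fcoeff_sum_e pg
    by (simp add: z_def hscale_minus_one)
  have "dist z (e 0) = norm g" by (simp add: z_def dist_norm)
  moreover have "norm g < r"
  proof -
    have "1 / real M < r^2" using M r M0 by (simp add: field_simps)
    then have "(norm g)^2 < r^2" using ng2 by simp
    then show ?thesis using r by (simp add: power_less_imp_less_base)
  qed
  ultimately have "quad_f rank_one_form (e 0) - 1/2 \<le> quad_f rank_one_form z" using r(2)[OF zD] by simp
  then show False using q0 quad_f_rank_one_form[OF zD] pz by simp
qed

end

lemma (in orthonormal_seq) regular_sum_with_nonregular_summand:
  "diag_form \<in> Rf \<and> rank_one_form \<in> Vf - Rf \<and> diag_rank_one_form \<in> Rf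
   \<and> oplus_Vf diag_form rank_one_form = Some diag_rank_one_form"
proof -
  have v: "e 0 \<noteq> 0" using norm_e[of 0] by auto
  have "\<not> bounded_f diag_rank_one_form"
    by (rule unbounded_by_e[OF positive_diag_rank_one_form diag_rank_one_form_dom])
      (simp add: quad_f_diag_rank_one_form[OF e_in_wdom] wquad_e)
  then have "diag_rank_one_form \<in> Vf" using positive_diag_rank_one_form by (simp add: Vf_def)
  moreover have "diag_form \<in> Vf" "rank_one_form \<in> Vf"
    using positive_diag_form diag_form_unbounded positive_rank_one_form rank_one_form_unbounded
    by (simp_all add: Vf_def)
  moreover have "oplus_Vf diag_form rank_one_form = Some diag_rank_one_form"
    by (simp add: oplus_Vf_def diag_rank_one_form_def diag_form_simps rank_one_form_simps)
  ultimately show ?thesis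
    using lsc_f_diag_form lsc_f_diag_rank_one_form not_lsc_f_rank_one_form by (simp add: Rf_iff[OF v])
qed

theorem theorem4p13:
  assumes "infinite_dimensional TYPE('h::chilbert)"
  shows "gen_effect_algebra (Rf :: 'h form set) (restrict_op Rf oplus_Vf) zero_f
         \<and> \<not> sub_gea (Vf :: 'h form set) oplus_Vf zero_f Rf"
proof
  interpret orthonormal_seq "orth_seq :: nat \<Rightarrow> 'h"
    by unfold_locales (rule orth_seq_orth[OF assms])
  have "orth_seq 0 \<noteq> (0 :: 'h)" using norm_e[of 0] by auto
  then show "gen_effect_algebra (Rf :: 'h form set) (restrict_op Rf oplus_Vf) zero_f"
    by (rule gen_effect_algebra_Rf)
  show "\<not> sub_gea (Vf :: 'h form set) oplus_Vf zero_f Rf"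
    using regular_sum_with_nonregular_summand unfolding sub_gea_def Rf_def by blast
qed

end
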